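(* Let $p$ be even and let $\mathcal{C}_0$ be a two-sided $p$-periodic CMV matrix with discriminant $\Delta_{\mathcal{C}_0}$ and isospectral torus $\mathcal{T}_{\mathcal{C}_0}$. Given a two-sided (not a priori periodic) CMV matrix $\mathcal{C}$, we have $\Delta_{\mathcal{C}_0}(\mathcal{C})=S^p+S^{-p}$ if and only if $\mathcal{C}\in\mathcal{T}_{\mathcal{C}_0}$, where $S$ is the right shift on $\ell^2(\mathbb{Z})$.
   Context: For $\alpha\in\mathbb{D}=\{|z|<1\}$ let $\rho=(1-|\alpha|^2)^{1/2}$ and $\Theta(\alpha)=\begin{pmatrix}\bar\alpha&\rho\\ \rho&-\alpha\end{pmatrix}$. Given $\{\alpha_n\}_{n\in\mathbb{Z}}\subset\mathbb{D}$, the two-sided CMV matrix is $\mathcal{C}=\mathcal{L}\mathcal{M}$ on $\ell^2(\mathbb{Z})$, where $\mathcal{L}=\bigoplus_j\Theta(\alpha_{2j})$ with $\Theta(\alpha_{2j})$ acting on the coordinates $(2j,2j+1)$, and $\mathcal{M}=\bigoplus_j\Theta(\alpha_{2j-1})$ with $\Theta(\alpha_{2j-1})$ acting on the coordinates $(2j-1,2j)$; $\mathcal{C}$ is unitary. It is $p$-periodic if $\alpha_{n+p}=\alpha_n$. For periodic $\mathcal{C}_0$ with coefficients $\alpha^{(0)}_n$, define $M_n(z)=(\rho^{(0)}_n)^{-1}\begin{pmatrix}z&-\bar\alpha^{(0)}_n\\-\alpha^{(0)}_nz&1\end{pmatrix}$ and the discriminant $\Delta_{\mathcal{C}_0}(z)=\mathrm{Tr}\bigl(z^{-p/2}M_{p-1}(z)\cdots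 M_0(z)\bigr)$, a Laurent polynomial real on the unit circle; $\Delta_{\mathcal{C}_0}(\mathcal{C})$ is this Laurent polynomial applied to the unitary $\mathcal{C}$ (using $\mathcal{C}^{-1}=\mathcal{C}^*$). The isospectral torus $\mathcal{T}_{\mathcal{C}_0}$ is the set of two-sided $p$-periodic CMV matrices with the same discriminant as $\mathcal{C}_0$. $(Su)_n=u_{n-1}$. *)

theory Defs
  imports Complex_Main "HOL-Computational_Algebra.Polynomial"
begin

text \<open>All matrices occurring here are banded, so products are finite sums over
  the finitely many indices where both factors are nonzero.\<close>

type_synonym zmat = "int \<Rightarrow> int \<Rightarrow> complex"

definition zmat_mult :: "zmat \<Rightarrow> zmat \<Rightarrow> zmat" where
  "zmat_mult A B = (\<lambda>i j. \<Sum>k\<in>{k. A i k \<noteq> 0 \<and> B k j \<noteq> 0}. A i k * B k j)"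

definition zmat_id :: zmat where
  "zmat_id = (\<lambda>i j. if i = j then 1 else 0)"

definition zmat_adj :: "zmat \<Rightarrow> zmat" where
  "zmat_adj A = (\<lambda>i j. cnj (A j i))"

fun zmat_pow :: "zmat \<Rightarrow> nat \<Rightarrow> zmat" where
  "zmat_pow A 0 = zmat_id"
| "zmat_pow A (Suc n) = zmat_mult A (zmat_pow A n)"

text \<open>Integer powers of a unitary operator, using U^{-1} = U^*.\<close>
definition zmat_zpow :: "zmat \<Rightarrow> int \<Rightarrow> zmat" where
  "zmat_zpow U k = (if 0 \<le> k then zmat_pow U (nat k) else zmat_pow (zmat_adj U) (nat (- k)))"

text \<open>Right shift: (S u)_n = u_{n-1}, i.e. S has entries S(i,j) = 1 iff i = j + 1.\<close>
definition shiftR :: zmat where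
  "shiftR = (\<lambda>i j. if i = j + 1 then 1 else 0)"

definition rho :: "complex \<Rightarrow> complex" where
  "rho a = complex_of_real (sqrt (1 - (cmod a)\<^sup>2))"

text \<open>Block-diagonal direct sum of Theta(alpha_m) acting on coordinates (m, m+1),
  for all m with m mod 2 = e.\<close>
definition theta_blocks :: "int \<Rightarrow> (int \<Rightarrow> complex) \<Rightarrow> zmat" where
  "theta_blocks e \<alpha> = (\<lambda>i j.
     let m = (if (i - e) mod 2 = 0 then i else i - 1) in
     if i = m \<and> j = m then cnj (\<alpha> m)
     else if i = m \<and> j = m + 1 then rho (\<alpha> m)
     else if i = m + 1 \<and> j = m then rho (\<alpha> m)
     else if i = m + 1 \<and> j = m + 1 then - \<alpha> m
     else 0)"

definition cmvL :: "(int \<Rightarrow> complex) \<Rightarrow> zmat" where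
  "cmvL \<alpha> = theta_blocks 0 \<alpha>"

definition cmvM :: "(int \<Rightarrow> complex) \<Rightarrow> zmat" where
  "cmvM \<alpha> = theta_blocks 1 \<alpha>"

definition cmv :: "(int \<Rightarrow> complex) \<Rightarrow> zmat" where
  "cmv \<alpha> = zmat_mult (cmvL \<alpha>) (cmvM \<alpha>)"

definition in_disk_seq :: "(int \<Rightarrow> complex) \<Rightarrow> bool" where
  "in_disk_seq \<alpha> \<longleftrightarrow> (\<forall>n. cmod (\<alpha> n) < 1)"

definition periodic_seq :: "(int \<Rightarrow> complex) \<Rightarrow> nat \<Rightarrow> bool" where
  "periodic_seq \<alpha> p \<longleftrightarrow> (\<forall>n. \<alpha> (n + int p) = \<alpha> n)"

text \<open>2x2 matrices with polynomial entries, as quadruples (a,b,c,d) = [[a,b],[c,d]].\<close>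
type_synonym pm2 = "complex poly \<times> complex poly \<times> complex poly \<times> complex poly"

definition pm2_mult :: "pm2 \<Rightarrow> pm2 \<Rightarrow> pm2" where
  "pm2_mult X Y = (case X of (a,b,c,d) \<Rightarrow> case Y of (e,f,g,h) \<Rightarrow>
     (a*e + b*g, a*f + b*h, c*e + d*g, c*f + d*h))"

definition pm2_id :: pm2 where
  "pm2_id = (1, 0, 0, 1)"

definition pm2_trace :: "pm2 \<Rightarrow> complex poly" where
  "pm2_trace X = (case X of (a,b,c,d) \<Rightarrow> a + d)"

definition transfer :: "(int \<Rightarrow> complex) \<Rightarrow> int \<Rightarrow> pm2" where
  "transfer \<alpha> n = (let r = inverse (rho (\<alpha> n)) in
     (smult r [:0, 1:], smult r [: - cnj (\<alpha> n) :],
      smult r [:0, - \<alpha> n:], smult r [:1:]))"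

fun transfer_prod :: "(int \<Rightarrow> complex) \<Rightarrow> nat \<Rightarrow> pm2" where
  "transfer_prod \<alpha> 0 = pm2_id"
| "transfer_prod \<alpha> (Suc n) = pm2_mult (transfer \<alpha> (int n)) (transfer_prod \<alpha> n)"

definition disc_poly :: "(int \<Rightarrow> complex) \<Rightarrow> nat \<Rightarrow> complex poly" where
  "disc_poly \<alpha> p = pm2_trace (transfer_prod \<alpha> p)"

definition discriminant :: "(int \<Rightarrow> complex) \<Rightarrow> nat \<Rightarrow> complex \<Rightarrow> complex" where
  "discriminant \<alpha> p z = z powi (- int (p div 2)) * poly (disc_poly \<alpha> p) z"

text \<open>The Laurent polynomial Delta applied to a unitary U:
  sum_{k=0..p} coeff(T,k) U^{k - p/2}.\<close>
definition disc_apply :: "(int \<Rightarrow> complex) \<Rightarrow> nat \<Rightarrow> zmat \<Rightarrow> zmat" where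
  "disc_apply \<alpha> p U = (\<lambda>i j. \<Sum>k\<le>p. coeff (disc_poly \<alpha> p) k *
      zmat_zpow U (int k - int (p div 2)) i j)"

definition iso_torus :: "(int \<Rightarrow> complex) \<Rightarrow> nat \<Rightarrow> zmat set" where
  "iso_torus \<alpha>0 p = {cmv \<beta> | \<beta>. in_disk_seq \<beta> \<and> periodic_seq \<beta> p \<and>
      (\<forall>z. z \<noteq> 0 \<longrightarrow> discriminant \<beta> p z = discriminant \<alpha>0 p z)}"

end

theory Submission
  imports Defs "Jordan_Normal_Form.Determinant" "HOL-Computational_Algebra.Fundamental_Theorem_Algebra"
begin

text \<open>Both directions rest on Floquet solutions. For \<open>z \<noteq> 0\<close> and \<open>l + 1/l = \<Delta>(z)\<close>, a
  \<open>p\<close>-periodic CMV matrix has a solution of \<open>\<C> u = z u\<close> with \<open>u(n+p) = l u(n)\<close>, built from an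
  eigenvector of the transfer matrix over one period; on such \<open>u\<close> both \<open>\<Delta>(\<C>)\<close> and
  \<open>S\<^sup>p + S\<^sup>-\<^sup>p\<close> act as multiplication by \<open>l + 1/l\<close>.

  If \<open>\<Delta>\<^sub>0(\<C>) = S\<^sup>p + S\<^sup>-\<^sup>p\<close>, then \<open>\<C>\<close> commutes with \<open>S\<^sup>p + S\<^sup>-\<^sup>p\<close>; as \<open>\<C>\<close> has bandwidth 2
  and \<open>p \<ge> 2\<close>, this forces \<open>\<C>\<close>, hence \<open>\<alpha>\<close>, to be \<open>p\<close>-periodic, and comparing both operators on a
  Floquet solution of \<open>\<C>\<close> gives \<open>\<Delta>\<^sub>\<C> = \<Delta>\<^sub>0\<close>.

  Conversely, for periodic \<open>\<C>\<close> the banded operator \<open>D = \<Delta>(\<C>) - S\<^sup>p - S\<^sup>-\<^sup>p\<close> kills Floquet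
  solutions. For all but finitely many \<open>l\<close> the equation \<open>\<Delta>(z) = l + 1/l\<close> has \<open>p\<close> distinct roots,
  giving \<open>p\<close> independent Floquet solutions with multiplier \<open>l\<close>, which span all sequences with
  that multiplier. So each row of \<open>D\<close>, summed over a residue class mod \<open>p\<close> against powers of
  \<open>l\<close>, is a Laurent polynomial in \<open>l\<close> with infinitely many zeros; hence \<open>D = 0\<close>.\<close>

section \<open>Banded matrices acting on sequences\<close>

definition banded :: "int \<Rightarrow> zmat \<Rightarrow> bool" where
  "banded r A \<longleftrightarrow> (\<forall>i j. r < \<bar>i - j\<bar> \<longrightarrow> A i j = 0)"

text \<open>As in \<open>zmat_mult\<close>, the sum runs over the support of the row; it is meaningful for banded
  matrices, where that support is finite (an infinite support gives the junk value 0).\<close>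
definition zmat_apply :: "zmat \<Rightarrow> (int \<Rightarrow> complex) \<Rightarrow> int \<Rightarrow> complex" where
  "zmat_apply A v = (\<lambda>i. \<Sum>j\<in>{j. A i j \<noteq> 0}. A i j * v j)"

definition unit_seq :: "int \<Rightarrow> int \<Rightarrow> complex" where
  "unit_seq j = (\<lambda>k. if k = j then 1 else 0)"

lemma banded_mono: "banded r A \<Longrightarrow> r \<le> s \<Longrightarrow> banded s A"
  unfolding banded_def by auto

lemma banded_row_support: "banded r A \<Longrightarrow> {j. A i j \<noteq> 0} \<subseteq> {i - r..i + r}"
  unfolding banded_def by force

lemma zmat_apply_window:
  assumes "banded r A" "r \<le> R"
  shows "zmat_apply A v i = (\<Sum>j=i-R..i+R. A i j * v j)"
proof -
  have "{j. A i j \<noteq> 0} \<subseteq> {i-R..i+R}" using banded_row_support[OF assms(1)] assms(2) by force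
  then show ?thesis unfolding zmat_apply_def by (intro sum.mono_neutral_left) auto
qed

lemma zmat_mult_window:
  assumes "banded r A" "r \<le> R"
  shows "zmat_mult A B i j = (\<Sum>k=i-R..i+R. A i k * B k j)"
proof -
  have "{k. A i k \<noteq> 0 \<and> B k j \<noteq> 0} \<subseteq> {i-R..i+R}"
    using banded_row_support[OF assms(1)] assms(2) by force
  then show ?thesis unfolding zmat_mult_def by (intro sum.mono_neutral_left) auto
qed

lemma banded_mult:
  assumes A: "banded r A" and B: "banded s B"
  shows "banded (r + s) (zmat_mult A B)"
  unfolding banded_def
proof (intro allI impI)
  fix i j assume far: "r + s < \<bar>i - j\<bar>"
  have "zmat_mult A B i j = (\<Sum>k=i-r..i+r. A i k * B k j)"
    using zmat_mult_window[OF A order_refl] .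
  also have "\<dots> = 0"
  proof (intro sum.neutral ballI)
    fix k assume "k \<in> {i-r..i+r}"
    then have "s < \<bar>k - j\<bar>" using far by auto
    then show "A i k * B k j = 0" using B unfolding banded_def by auto
  qed
  finally show "zmat_mult A B i j = 0" .
qed

lemma zmat_apply_mult:
  assumes A: "banded r A" and B: "banded s B"
  shows "zmat_apply (zmat_mult A B) v = zmat_apply A (zmat_apply B v)"
proof
  fix i
  have "zmat_apply (zmat_mult A B) v i = (\<Sum>j=i-(r+s)..i+(r+s). zmat_mult A B i j * v j)"
    using zmat_apply_window[OF banded_mult[OF A B] order_refl] .
  also have "\<dots> = (\<Sum>j=i-(r+s)..i+(r+s). \<Sum>k=i-r..i+r. A i k * B k j * v j)"
    using zmat_mult_window[OF A order_refl] by (simp add: sum_distrib_right)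
  also have "\<dots> = (\<Sum>k=i-r..i+r. \<Sum>j=i-(r+s)..i+(r+s). A i k * B k j * v j)"
    by (rule sum.swap)
  also have "\<dots> = (\<Sum>k=i-r..i+r. A i k * zmat_apply B v k)"
  proof (intro sum.cong refl)
    fix k assume k: "k \<in> {i-r..i+r}"
    have "zmat_apply B v k = (\<Sum>j=k-s..k+s. B k j * v j)"
      using zmat_apply_window[OF B order_refl] .
    also have "\<dots> = (\<Sum>j=i-(r+s)..i+(r+s). B k j * v j)"
      by (rule sum.mono_neutral_left) (use k B in \<open>auto simp: banded_def\<close>)
    finally show "(\<Sum>j=i-(r+s)..i+(r+s). A i k * B k j * v j) = A i k * zmat_apply B v k"
      by (simp add: sum_distrib_left mult.assoc)
  qed
  also have "\<dots> = zmat_apply A (zmat_apply B v) i"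
    using zmat_apply_window[OF A order_refl] by simp
  finally show "zmat_apply (zmat_mult A B) v i = zmat_apply A (zmat_apply B v) i" .
qed

lemma banded_adj: "banded r A \<Longrightarrow> banded r (zmat_adj A)"
  unfolding banded_def zmat_adj_def by (metis abs_minus_commute complex_cnj_zero)

lemma zmat_adj_mult: "zmat_adj (zmat_mult A B) = zmat_mult (zmat_adj B) (zmat_adj A)"
proof (intro ext)
  fix i j
  have "{k. cnj (B k i) \<noteq> 0 \<and> cnj (A j k) \<noteq> 0} = {k. A j k \<noteq> 0 \<and> B k i \<noteq> 0}" by auto
  then show "zmat_adj (zmat_mult A B) i j = zmat_mult (zmat_adj B) (zmat_adj A) i j"
    unfolding zmat_adj_def zmat_mult_def by (simp add: cnj_sum mult.commute)
qed

lemma banded_id: "banded 0 zmat_id"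
  unfolding banded_def zmat_id_def by auto

lemma zmat_apply_id: "zmat_apply zmat_id v = v"
  using zmat_apply_window[OF banded_id order_refl] by (simp add: zmat_id_def fun_eq_iff)

lemma zmat_apply_unit_seq:
  assumes "banded r A"
  shows "zmat_apply A (unit_seq j) i = A i j"
proof -
  have "finite {k. A i k \<noteq> 0}"
    using banded_row_support[OF assms] by (rule finite_subset) simp
  then show ?thesis unfolding zmat_apply_def unit_seq_def by (simp add: if_distrib cong: if_cong)
qed

lemma banded_pow: "banded r A \<Longrightarrow> 0 \<le> r \<Longrightarrow> banded (int n * r) (zmat_pow A n)"
proof (induction n)
  case 0
  then show ?case using banded_id by simp
next
  case (Suc n)
  then have "banded (r + int n * r) (zmat_pow A (Suc n))"
    using banded_mult by simp
  then show ?case by (simp add: algebra_simps)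
qed

lemma zmat_apply_pow: "banded r A \<Longrightarrow> 0 \<le> r \<Longrightarrow> zmat_apply (zmat_pow A n) v = (zmat_apply A ^^ n) v"
proof (induction n)
  case 0
  then show ?case by (simp add: zmat_apply_id)
next
  case (Suc n)
  then show ?case using zmat_apply_mult[OF Suc.prems(1) banded_pow[OF Suc.prems]] by simp
qed

lemma zmat_apply_sum:
  assumes "banded r A" "finite K"
  shows "zmat_apply A (\<lambda>j. \<Sum>k\<in>K. f k j) i = (\<Sum>k\<in>K. zmat_apply A (f k) i)"
  using zmat_apply_window[OF assms(1) order_refl] by (simp add: sum_distrib_left sum.swap[of _ K])

lemma zmat_apply_add:
  assumes "banded r A"
  shows "zmat_apply A (\<lambda>j. v j + w j) i = zmat_apply A v i + zmat_apply A w i"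
  using zmat_apply_window[OF assms order_refl] by (simp add: algebra_simps sum.distrib)

lemma zmat_apply_scale:
  assumes "banded r A"
  shows "zmat_apply A (\<lambda>j. a * v j) i = a * zmat_apply A v i"
  using zmat_apply_window[OF assms order_refl] by (simp add: algebra_simps sum_distrib_left)

lemma zmat_apply_lincomb:
  assumes "finite K" "\<And>k. k \<in> K \<Longrightarrow> banded R (A k)"
  shows "zmat_apply (\<lambda>i j. \<Sum>k\<in>K. c k * A k i j) v i = (\<Sum>k\<in>K. c k * zmat_apply (A k) v i)"
proof -
  have "banded R (\<lambda>i j. \<Sum>k\<in>K. c k * A k i j)"
    using assms(2) unfolding banded_def by (auto intro!: sum.neutral)
  then have "zmat_apply (\<lambda>i j. \<Sum>k\<in>K. c k * A k i j) v i
      = (\<Sum>j=i-R..i+R. (\<Sum>k\<in>K. c k * A k i j) * v j)"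
    using zmat_apply_window order_refl by blast
  also have "\<dots> = (\<Sum>k\<in>K. c k * (\<Sum>j=i-R..i+R. A k i j * v j))"
    by (simp add: sum_distrib_right sum_distrib_left sum.swap[of _ K] mult.assoc)
  also have "\<dots> = (\<Sum>k\<in>K. c k * zmat_apply (A k) v i)"
    using zmat_apply_window[OF assms(2) order_refl] by simp
  finally show ?thesis .
qed

lemma zmat_apply_diff:
  assumes "banded R A" "banded R B"
  shows "zmat_apply (\<lambda>i j. A i j - B i j) v i = zmat_apply A v i - zmat_apply B v i"
proof -
  have "banded R (\<lambda>i j. A i j - B i j)" using assms unfolding banded_def by auto
  then show ?thesis
    using zmat_apply_window[OF _ order_refl] assms by (simp add: algebra_simps sum_subtractf)
qed

lemma funpow_eigenvector:
  assumes "banded r A" "zmat_apply A u = (\<lambda>i. z * u i)"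
  shows "(zmat_apply A ^^ n) u = (\<lambda>i. z ^ n * u i)"
proof (induction n)
  case (Suc n)
  have "(zmat_apply A ^^ Suc n) u = zmat_apply A (\<lambda>i. z ^ n * u i)"
    using Suc by simp
  also have "\<dots> = (\<lambda>i. z ^ Suc n * u i)"
    using zmat_apply_scale[OF assms(1)] assms(2) by (simp add: fun_eq_iff)
  finally show ?case .
qed simp

lemma rho_mult_self: "cmod a < 1 \<Longrightarrow> rho a * rho a = 1 - a * cnj a"
proof -
  assume "cmod a < 1"
  then have "0 \<le> 1 - (cmod a)\<^sup>2" by (simp add: abs_square_le_1)
  then have "rho a * rho a = complex_of_real (1 - (cmod a)\<^sup>2)"
    unfolding rho_def of_real_mult[symmetric] by simp
  also have "\<dots> = 1 - a * cnj a"
    by (simp only: complex_norm_square[symmetric] of_real_diff of_real_1)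
  finally show ?thesis .
qed

lemma rho_nonzero: "cmod a < 1 \<Longrightarrow> rho a \<noteq> 0"
proof -
  assume "cmod a < 1"
  then have "(cmod a)\<^sup>2 < 1" by (simp add: abs_square_less_1)
  then show ?thesis unfolding rho_def by simp
qed

lemma cnj_rho [simp]: "cnj (rho a) = rho a"
  unfolding rho_def by simp

lemma theta_blocks_even_row:
  "(i - e) mod 2 = 0 \<Longrightarrow>
   theta_blocks e \<alpha> i j = (if j = i then cnj (\<alpha> i) else if j = i + 1 then rho (\<alpha> i) else 0)"
  unfolding theta_blocks_def Let_def by auto

lemma theta_blocks_odd_row:
  "(i - e) mod 2 \<noteq> 0 \<Longrightarrow>
   theta_blocks e \<alpha> i j = (if j = i - 1 then rho (\<alpha> (i - 1)) else if j = i then - \<alpha> (i - 1) else 0)"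
  unfolding theta_blocks_def Let_def by auto

lemma banded_theta_blocks: "banded 1 (theta_blocks e \<alpha>)"
  unfolding banded_def
proof (intro allI impI)
  fix i j :: int
  assume "1 < \<bar>i - j\<bar>"
  then have "j \<noteq> i" "j \<noteq> i + 1" "j \<noteq> i - 1" by auto
  then show "theta_blocks e \<alpha> i j = 0"
    by (cases "(i - e) mod 2 = 0") (simp_all add: theta_blocks_even_row theta_blocks_odd_row)
qed

lemma zmat_apply_banded_1:
  "banded 1 A \<Longrightarrow> zmat_apply A v i = A i (i - 1) * v (i - 1) + A i i * v i + A i (i + 1) * v (i + 1)"
proof -
  assume "banded 1 A"
  moreover have "{i - 1..i + 1} = {i - 1, i, i + 1}" by auto
  ultimately show ?thesis using zmat_apply_window[of 1 A 1 v i] by simp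
qed

lemma parity_cases:
  fixes i e :: int
  obtains "(i - e) mod 2 = 0" "(i + 1 - e) mod 2 \<noteq> 0" "(i - 1 - e) mod 2 \<noteq> 0"
  | "(i - e) mod 2 \<noteq> 0" "(i + 1 - e) mod 2 = 0" "(i - 1 - e) mod 2 = 0"
proof (cases "(i - e) mod 2 = 0")
  case True
  then have "(i + 1 - e) mod 2 \<noteq> 0" "(i - 1 - e) mod 2 \<noteq> 0" by presburger+
  with True show ?thesis by (intro that(1))
next
  case False
  then have "(i + 1 - e) mod 2 = 0" "(i - 1 - e) mod 2 = 0" by presburger+
  with False show ?thesis by (intro that(2))
qed

lemma zmat_apply_theta_even:
  "(i - e) mod 2 = 0 \<Longrightarrow>
   zmat_apply (theta_blocks e \<alpha>) v i = cnj (\<alpha> i) * v i + rho (\<alpha> i) * v (i + 1)"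
  by (simp add: zmat_apply_banded_1[OF banded_theta_blocks] theta_blocks_even_row)

lemma zmat_apply_theta_odd:
  "(i - e) mod 2 \<noteq> 0 \<Longrightarrow>
   zmat_apply (theta_blocks e \<alpha>) v i = rho (\<alpha> (i - 1)) * v (i - 1) - \<alpha> (i - 1) * v i"
  by (simp add: zmat_apply_banded_1[OF banded_theta_blocks] theta_blocks_odd_row)

lemma zmat_apply_theta_adj_even:
  assumes "(i - e) mod 2 = 0"
  shows "zmat_apply (zmat_adj (theta_blocks e \<alpha>)) v i = \<alpha> i * v i + rho (\<alpha> i) * v (i + 1)"
proof -
  have "(i + 1 - e) mod 2 \<noteq> 0" "(i - 1 - e) mod 2 \<noteq> 0" using assms by presburger+
  with assms show ?thesis
    by (subst zmat_apply_banded_1[OF banded_adj[OF banded_theta_blocks]])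
      (simp add: zmat_adj_def theta_blocks_even_row theta_blocks_odd_row)
qed

lemma zmat_apply_theta_adj_odd:
  assumes "(i - e) mod 2 \<noteq> 0"
  shows "zmat_apply (zmat_adj (theta_blocks e \<alpha>)) v i
           = rho (\<alpha> (i - 1)) * v (i - 1) - cnj (\<alpha> (i - 1)) * v i"
proof -
  have "(i + 1 - e) mod 2 = 0" "(i - 1 - e) mod 2 = 0" using assms by presburger+
  with assms show ?thesis
    by (subst zmat_apply_banded_1[OF banded_adj[OF banded_theta_blocks]])
      (simp add: zmat_adj_def theta_blocks_even_row theta_blocks_odd_row)
qed

lemma theta_blocks_adj_right_inverse:
  assumes "in_disk_seq \<alpha>"
  shows "zmat_apply (theta_blocks e \<alpha>) (zmat_apply (zmat_adj (theta_blocks e \<alpha>)) v) = v"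
proof
  fix i
  have sq: "rho (\<alpha> n) * rho (\<alpha> n) = 1 - \<alpha> n * cnj (\<alpha> n)" for n
    using assms rho_mult_self unfolding in_disk_seq_def by auto
  show "zmat_apply (theta_blocks e \<alpha>) (zmat_apply (zmat_adj (theta_blocks e \<alpha>)) v) i = v i"
  proof (cases i e rule: parity_cases)
    case 1
    then have "zmat_apply (theta_blocks e \<alpha>) (zmat_apply (zmat_adj (theta_blocks e \<alpha>)) v) i
        = cnj (\<alpha> i) * (\<alpha> i * v i + rho (\<alpha> i) * v (i + 1))
          + rho (\<alpha> i) * (rho (\<alpha> i) * v i - cnj (\<alpha> i) * v (i + 1))"
      by (simp add: zmat_apply_theta_even zmat_apply_theta_adj_even zmat_apply_theta_adj_odd)
    also have "\<dots> = (\<alpha> i * cnj (\<alpha> i) + rho (\<alpha> i) * rho (\<alpha> i)) * v i"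
      by (simp add: algebra_simps)
    finally show ?thesis using sq[of i] by simp
  next
    case 2
    then have "zmat_apply (theta_blocks e \<alpha>) (zmat_apply (zmat_adj (theta_blocks e \<alpha>)) v) i
        = rho (\<alpha> (i - 1)) * (\<alpha> (i - 1) * v (i - 1) + rho (\<alpha> (i - 1)) * v i)
          - \<alpha> (i - 1) * (rho (\<alpha> (i - 1)) * v (i - 1) - cnj (\<alpha> (i - 1)) * v i)"
      by (simp add: zmat_apply_theta_odd zmat_apply_theta_adj_even zmat_apply_theta_adj_odd)
    also have "\<dots> = (\<alpha> (i - 1) * cnj (\<alpha> (i - 1)) + rho (\<alpha> (i - 1)) * rho (\<alpha> (i - 1))) * v i"
      by (simp add: algebra_simps)
    finally show ?thesis using sq[of "i - 1"] by simp
  qed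
qed

lemma theta_blocks_adj_left_inverse:
  assumes "in_disk_seq \<alpha>"
  shows "zmat_apply (zmat_adj (theta_blocks e \<alpha>)) (zmat_apply (theta_blocks e \<alpha>) v) = v"
proof
  fix i
  have sq: "rho (\<alpha> n) * rho (\<alpha> n) = 1 - \<alpha> n * cnj (\<alpha> n)" for n
    using assms rho_mult_self unfolding in_disk_seq_def by auto
  show "zmat_apply (zmat_adj (theta_blocks e \<alpha>)) (zmat_apply (theta_blocks e \<alpha>) v) i = v i"
  proof (cases i e rule: parity_cases)
    case 1
    then have "zmat_apply (zmat_adj (theta_blocks e \<alpha>)) (zmat_apply (theta_blocks e \<alpha>) v) i
        = \<alpha> i * (cnj (\<alpha> i) * v i + rho (\<alpha> i) * v (i + 1))
          + rho (\<alpha> i) * (rho (\<alpha> i) * v i - \<alpha> i * v (i + 1))"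
      by (simp add: zmat_apply_theta_even zmat_apply_theta_odd zmat_apply_theta_adj_even)
    also have "\<dots> = (\<alpha> i * cnj (\<alpha> i) + rho (\<alpha> i) * rho (\<alpha> i)) * v i"
      by (simp add: algebra_simps)
    finally show ?thesis using sq[of i] by simp
  next
    case 2
    then have "zmat_apply (zmat_adj (theta_blocks e \<alpha>)) (zmat_apply (theta_blocks e \<alpha>) v) i
        = rho (\<alpha> (i - 1)) * (cnj (\<alpha> (i - 1)) * v (i - 1) + rho (\<alpha> (i - 1)) * v i)
          - cnj (\<alpha> (i - 1)) * (rho (\<alpha> (i - 1)) * v (i - 1) - \<alpha> (i - 1) * v i)"
      by (simp add: zmat_apply_theta_even zmat_apply_theta_odd zmat_apply_theta_adj_odd)
    also have "\<dots> = (\<alpha> (i - 1) * cnj (\<alpha> (i - 1)) + rho (\<alpha> (i - 1)) * rho (\<alpha> (i - 1))) * v i"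
      by (simp add: algebra_simps)
    finally show ?thesis using sq[of "i - 1"] by simp
  qed
qed

lemma banded_cmv: "banded 2 (cmv \<alpha>)"
  using banded_mult[OF banded_theta_blocks banded_theta_blocks]
  unfolding cmv_def cmvL_def cmvM_def by simp

lemma zmat_apply_cmv: "zmat_apply (cmv \<alpha>) v = zmat_apply (cmvL \<alpha>) (zmat_apply (cmvM \<alpha>) v)"
  unfolding cmv_def cmvL_def cmvM_def using zmat_apply_mult[OF banded_theta_blocks banded_theta_blocks] .

lemma zmat_apply_cmv_adj:
  "zmat_apply (zmat_adj (cmv \<alpha>)) v = zmat_apply (zmat_adj (cmvM \<alpha>)) (zmat_apply (zmat_adj (cmvL \<alpha>)) v)"
  unfolding cmv_def cmvL_def cmvM_def zmat_adj_mult
  using zmat_apply_mult[OF banded_adj[OF banded_theta_blocks] banded_adj[OF banded_theta_blocks]] .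

lemma cmv_adj_right_inverse: "in_disk_seq \<alpha> \<Longrightarrow> zmat_apply (cmv \<alpha>) (zmat_apply (zmat_adj (cmv \<alpha>)) v) = v"
  unfolding zmat_apply_cmv zmat_apply_cmv_adj cmvL_def cmvM_def
  by (simp add: theta_blocks_adj_right_inverse)

lemma cmv_adj_left_inverse: "in_disk_seq \<alpha> \<Longrightarrow> zmat_apply (zmat_adj (cmv \<alpha>)) (zmat_apply (cmv \<alpha>) v) = v"
  unfolding zmat_apply_cmv zmat_apply_cmv_adj cmvL_def cmvM_def
  by (simp add: theta_blocks_adj_left_inverse)

definition rho_inv_prod :: "(int \<Rightarrow> complex) \<Rightarrow> nat \<Rightarrow> complex" where
  "rho_inv_prod \<alpha> n = (\<Prod>k<n. inverse (rho (\<alpha> (int k))))"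

lemma rho_inv_prod_nonzero: "in_disk_seq \<alpha> \<Longrightarrow> rho_inv_prod \<alpha> n \<noteq> 0"
  unfolding rho_inv_prod_def in_disk_seq_def using rho_nonzero by auto

lemma transfer_prod_Suc_entries:
  assumes "transfer_prod \<alpha> n = (a, b, c, d)"
  defines "r \<equiv> inverse (rho (\<alpha> (int n)))"
  shows "transfer_prod \<alpha> (Suc n) =
    (Polynomial.smult r (pCons 0 a) + Polynomial.smult (- r * cnj (\<alpha> n)) c,
     Polynomial.smult r (pCons 0 b) + Polynomial.smult (- r * cnj (\<alpha> n)) d,
     Polynomial.smult (- r * \<alpha> n) (pCons 0 a) + Polynomial.smult r c,
     Polynomial.smult (- r * \<alpha> n) (pCons 0 b) + Polynomial.smult r d)"
  using assms unfolding transfer_prod.simps transfer_def Let_def pm2_mult_def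
  by (simp add: algebra_simps smult_add_right)

lemma degree_smult_pCons_add_le:
  "degree q \<le> n \<Longrightarrow> degree w \<le> n \<Longrightarrow> degree (Polynomial.smult s (pCons 0 q) + Polynomial.smult t w) \<le> Suc n"
  by (metis (no_types, lifting) degree_add_le degree_pCons_le degree_smult_le le_SucI le_trans
      not_less_eq_eq)

lemma transfer_prod_shape:
  assumes "transfer_prod \<alpha> n = (a, b, c, d)"
  shows "degree a \<le> n \<and> degree b \<le> n \<and> degree c \<le> n \<and> degree d \<le> n \<and>
     coeff a n = rho_inv_prod \<alpha> n \<and> coeff b n = 0 \<and> poly c 0 = 0 \<and> poly d 0 = rho_inv_prod \<alpha> n"
  using assms
proof (induction n arbitrary: a b c d)
  case 0
  then show ?case by (simp add: pm2_id_def rho_inv_prod_def)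
next
  case (Suc n)
  obtain a0 b0 c0 d0 where P: "transfer_prod \<alpha> n = (a0, b0, c0, d0)"
    by (cases "transfer_prod \<alpha> n") auto
  note IH = Suc.IH[OF P]
  define r where "r = inverse (rho (\<alpha> (int n)))"
  have E: "a = Polynomial.smult r (pCons 0 a0) + Polynomial.smult (- r * cnj (\<alpha> n)) c0"
    "b = Polynomial.smult r (pCons 0 b0) + Polynomial.smult (- r * cnj (\<alpha> n)) d0"
    "c = Polynomial.smult (- r * \<alpha> n) (pCons 0 a0) + Polynomial.smult r c0"
    "d = Polynomial.smult (- r * \<alpha> n) (pCons 0 b0) + Polynomial.smult r d0"
    using Suc.prems unfolding transfer_prod_Suc_entries[OF P] r_def by simp_all
  have top_coeff: "coeff (Polynomial.smult s (pCons 0 q) + Polynomial.smult t w) (Suc n) = s * coeff q n"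
    if "degree w \<le> n" for s t q w
    using that by (simp add: coeff_eq_0)
  have rp: "rho_inv_prod \<alpha> (Suc n) = r * rho_inv_prod \<alpha> n"
    unfolding rho_inv_prod_def r_def by simp
  have "degree a \<le> Suc n" "degree b \<le> Suc n" "degree c \<le> Suc n" "degree d \<le> Suc n"
    unfolding E by (rule degree_smult_pCons_add_le; use IH in simp)+
  moreover have "coeff a (Suc n) = rho_inv_prod \<alpha> (Suc n)" "coeff b (Suc n) = 0"
    unfolding E rp by (subst top_coeff; use IH in simp)+
  moreover have "poly c 0 = 0" "poly d 0 = rho_inv_prod \<alpha> (Suc n)"
    unfolding E rp using IH by simp_all
  ultimately show ?case by blast
qed

lemma disc_poly_degree_le: "degree (disc_poly \<alpha> p) \<le> p"
proof -
  obtain a b c d where "transfer_prod \<alpha> p = (a, b, c, d)"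
    by (cases "transfer_prod \<alpha> p") auto
  then show ?thesis
    using transfer_prod_shape degree_add_le unfolding disc_poly_def pm2_trace_def by fastforce
qed

lemma disc_poly_lead_and_const_coeff:
  assumes "p > 0"
  shows "coeff (disc_poly \<alpha> p) p = rho_inv_prod \<alpha> p"
    and "poly (disc_poly \<alpha> p) 0 = rho_inv_prod \<alpha> p"
proof -
  obtain m where m: "p = Suc m" using assms by (cases p) auto
  obtain a0 b0 c0 d0 where P: "transfer_prod \<alpha> m = (a0, b0, c0, d0)"
    by (cases "transfer_prod \<alpha> m") auto
  obtain a b c d where "transfer_prod \<alpha> p = (a, b, c, d)"
    by (cases "transfer_prod \<alpha> p") auto
  moreover have "coeff d p = 0" "poly a 0 = 0"
    using calculation transfer_prod_shape[OF P]
    unfolding m transfer_prod_Suc_entries[OF P] by (auto simp: coeff_eq_0)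
  ultimately show "coeff (disc_poly \<alpha> p) p = rho_inv_prod \<alpha> p"
    and "poly (disc_poly \<alpha> p) 0 = rho_inv_prod \<alpha> p"
    using transfer_prod_shape unfolding disc_poly_def pm2_trace_def by auto
qed

lemma banded_cmv_zpow: "banded (2 * \<bar>m\<bar>) (zmat_zpow (cmv \<alpha>) m)"
proof (cases "0 \<le> m")
  case True
  then show ?thesis
    using banded_pow[OF banded_cmv, of "nat m"] unfolding zmat_zpow_def by (simp add: mult.commute)
next
  case False
  then show ?thesis
    using banded_pow[OF banded_adj[OF banded_cmv], of "nat (- m)"]
    unfolding zmat_zpow_def by (simp add: mult.commute)
qed

lemma zmat_apply_cmv_zpow:
  "zmat_apply (zmat_zpow (cmv \<alpha>) m) v =
   (if 0 \<le> m then (zmat_apply (cmv \<alpha>) ^^ nat m) v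
    else (zmat_apply (zmat_adj (cmv \<alpha>)) ^^ nat (- m)) v)"
  unfolding zmat_zpow_def
  using zmat_apply_pow[OF banded_cmv] zmat_apply_pow[OF banded_adj[OF banded_cmv]] by simp

lemma cmv_adj_eigenvector:
  assumes "in_disk_seq \<alpha>" "z \<noteq> 0" "zmat_apply (cmv \<alpha>) u = (\<lambda>i. z * u i)"
  shows "zmat_apply (zmat_adj (cmv \<alpha>)) u = (\<lambda>i. inverse z * u i)"
proof
  fix i
  have "u = zmat_apply (zmat_adj (cmv \<alpha>)) (\<lambda>i. z * u i)"
    using cmv_adj_left_inverse[OF assms(1), of u] assms(3) by simp
  then have "u i = z * zmat_apply (zmat_adj (cmv \<alpha>)) u i"
    using zmat_apply_scale[OF banded_adj[OF banded_cmv]] by metis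
  then show "zmat_apply (zmat_adj (cmv \<alpha>)) u i = inverse z * u i"
    using assms(2) by (simp add: field_simps)
qed

lemma cmv_zpow_eigenvector:
  assumes "in_disk_seq \<alpha>" "z \<noteq> 0" "zmat_apply (cmv \<alpha>) u = (\<lambda>i. z * u i)"
  shows "zmat_apply (zmat_zpow (cmv \<alpha>) m) u = (\<lambda>i. z powi m * u i)"
proof (cases "0 \<le> m")
  case True
  then show ?thesis
    unfolding zmat_apply_cmv_zpow using funpow_eigenvector[OF banded_cmv assms(3)]
    by (simp add: power_int_def)
next
  case False
  then show ?thesis
    unfolding zmat_apply_cmv_zpow
    using funpow_eigenvector[OF banded_adj[OF banded_cmv] cmv_adj_eigenvector[OF assms]]
    by (simp add: power_int_def)
qed

lemma banded_disc_apply: "banded (2 * int p) (disc_apply \<beta> p (cmv \<alpha>))"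
  unfolding banded_def disc_apply_def
proof (intro allI impI sum.neutral ballI)
  fix i j k assume far: "2 * int p < \<bar>i - j\<bar>" and "k \<in> {..p}"
  then have "banded (2 * int p) (zmat_zpow (cmv \<alpha>) (int k - int (p div 2)))"
    by (intro banded_mono[OF banded_cmv_zpow]) auto
  with far show "coeff (disc_poly \<beta> p) k * zmat_zpow (cmv \<alpha>) (int k - int (p div 2)) i j = 0"
    unfolding banded_def by simp
qed

lemma zmat_apply_disc_apply:
  "zmat_apply (disc_apply \<beta> p (cmv \<alpha>)) v i =
     (\<Sum>k\<le>p. coeff (disc_poly \<beta> p) k * zmat_apply (zmat_zpow (cmv \<alpha>) (int k - int (p div 2))) v i)"
  unfolding disc_apply_def
  by (rule zmat_apply_lincomb[where R = "2 * int p"]) (auto intro: banded_mono[OF banded_cmv_zpow])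

lemma disc_apply_eigenvector:
  assumes "in_disk_seq \<alpha>" "z \<noteq> 0" "zmat_apply (cmv \<alpha>) u = (\<lambda>i. z * u i)"
  shows "zmat_apply (disc_apply \<beta> p (cmv \<alpha>)) u = (\<lambda>i. discriminant \<beta> p z * u i)"
proof
  fix i
  let ?h = "int (p div 2)"
  let ?T = "disc_poly \<beta> p"
  have "z powi (int k - ?h) = z ^ k * z powi (- ?h)" for k
    using power_int_add[of z "int k" "- ?h"] assms(2) by simp
  then have "zmat_apply (disc_apply \<beta> p (cmv \<alpha>)) u i
      = (\<Sum>k\<le>p. coeff ?T k * (z ^ k * z powi (- ?h)) * u i)"
    unfolding zmat_apply_disc_apply cmv_zpow_eigenvector[OF assms] by (simp add: mult.assoc)
  also have "\<dots> = z powi (- ?h) * (\<Sum>k\<le>p. coeff ?T k * z ^ k) * u i"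
    by (simp add: sum_distrib_left sum_distrib_right algebra_simps)
  also have "(\<Sum>k\<le>p. coeff ?T k * z ^ k) = poly ?T z"
    unfolding poly_altdef
    by (rule sum.mono_neutral_right) (use disc_poly_degree_le in \<open>auto simp: coeff_eq_0\<close>)
  finally show "zmat_apply (disc_apply \<beta> p (cmv \<alpha>)) u i = discriminant \<beta> p z * u i"
    unfolding discriminant_def by simp
qed

lemma funpow_commute:
  assumes "\<And>v. f (g v) = g (f v)"
  shows "(f ^^ n) (g v) = g ((f ^^ n) v)"
  by (induction n) (simp_all add: assms)

lemma cmv_zpow_commute:
  assumes "in_disk_seq \<alpha>"
  shows "zmat_apply (zmat_zpow (cmv \<alpha>) m) (zmat_apply (cmv \<alpha>) v)
       = zmat_apply (cmv \<alpha>) (zmat_apply (zmat_zpow (cmv \<alpha>) m) v)"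
proof -
  have "zmat_apply (zmat_adj (cmv \<alpha>)) (zmat_apply (cmv \<alpha>) v)
      = zmat_apply (cmv \<alpha>) (zmat_apply (zmat_adj (cmv \<alpha>)) v)" for v
    using cmv_adj_right_inverse[OF assms] cmv_adj_left_inverse[OF assms] by simp
  then show ?thesis
    unfolding zmat_apply_cmv_zpow
    using funpow_commute[where f = "zmat_apply (zmat_adj (cmv \<alpha>))" and g = "zmat_apply (cmv \<alpha>)"]
    by (simp add: funpow_swap1)
qed

lemma disc_apply_commute_cmv:
  assumes "in_disk_seq \<alpha>"
  shows "zmat_apply (disc_apply \<beta> p (cmv \<alpha>)) (zmat_apply (cmv \<alpha>) v)
       = zmat_apply (cmv \<alpha>) (zmat_apply (disc_apply \<beta> p (cmv \<alpha>)) v)"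
proof
  fix i
  let ?Z = "\<lambda>k. zmat_zpow (cmv \<alpha>) (int k - int (p div 2))"
  let ?c = "\<lambda>k. coeff (disc_poly \<beta> p) k"
  have "zmat_apply (cmv \<alpha>) (zmat_apply (disc_apply \<beta> p (cmv \<alpha>)) v) i
      = zmat_apply (cmv \<alpha>) (\<lambda>j. \<Sum>k\<le>p. ?c k * zmat_apply (?Z k) v j) i"
    unfolding zmat_apply_disc_apply ..
  also have "\<dots> = (\<Sum>k\<le>p. ?c k * zmat_apply (cmv \<alpha>) (zmat_apply (?Z k) v) i)"
    by (simp add: zmat_apply_sum[OF banded_cmv] zmat_apply_scale[OF banded_cmv])
  also have "\<dots> = zmat_apply (disc_apply \<beta> p (cmv \<alpha>)) (zmat_apply (cmv \<alpha>) v) i"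
    unfolding zmat_apply_disc_apply cmv_zpow_commute[OF assms] ..
  finally show "zmat_apply (disc_apply \<beta> p (cmv \<alpha>)) (zmat_apply (cmv \<alpha>) v) i
      = zmat_apply (cmv \<alpha>) (zmat_apply (disc_apply \<beta> p (cmv \<alpha>)) v) i" by simp
qed

definition shift_sum :: "nat \<Rightarrow> zmat" where
  "shift_sum p = (\<lambda>i j. zmat_zpow shiftR (int p) i j + zmat_zpow shiftR (- int p) i j)"

lemma banded_shiftR: "banded 1 shiftR"
  unfolding banded_def shiftR_def by auto

lemma shiftR_pow_entry: "zmat_pow shiftR n i j = (if i = j + int n then 1 else 0)"
proof (induction n arbitrary: i)
  case (Suc n)
  have "zmat_pow shiftR (Suc n) i j = (\<Sum>k\<in>{i-1..i+1}. shiftR i k * zmat_pow shiftR n k j)"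
    using zmat_mult_window[OF banded_shiftR order_refl] by simp
  also have "\<dots> = (\<Sum>k\<in>{i-1}. shiftR i k * zmat_pow shiftR n k j)"
    by (rule sum.mono_neutral_right) (auto simp: shiftR_def)
  finally show ?case using Suc by (auto simp: shiftR_def)
qed (simp add: zmat_id_def)

lemma shiftR_adj_pow_entry: "zmat_pow (zmat_adj shiftR) n i j = (if j = i + int n then 1 else 0)"
proof (induction n arbitrary: i)
  case (Suc n)
  have "zmat_pow (zmat_adj shiftR) (Suc n) i j
      = (\<Sum>k\<in>{i-1..i+1}. zmat_adj shiftR i k * zmat_pow (zmat_adj shiftR) n k j)"
    using zmat_mult_window[OF banded_adj[OF banded_shiftR] order_refl] by simp
  also have "\<dots> = (\<Sum>k\<in>{i+1}. zmat_adj shiftR i k * zmat_pow (zmat_adj shiftR) n k j)"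
    by (rule sum.mono_neutral_right) (auto simp: shiftR_def zmat_adj_def)
  finally show ?case using Suc by (auto simp: shiftR_def zmat_adj_def)
qed (simp add: zmat_id_def)

lemma shift_sum_entry:
  "p > 0 \<Longrightarrow> shift_sum p i j = (if i = j + int p then 1 else 0) + (if j = i + int p then 1 else 0)"
  unfolding shift_sum_def zmat_zpow_def by (simp add: shiftR_pow_entry shiftR_adj_pow_entry)

lemma banded_shift_sum: "p > 0 \<Longrightarrow> banded (int p) (shift_sum p)"
  unfolding banded_def by (auto simp: shift_sum_entry)

lemma zmat_apply_shift_sum: "p > 0 \<Longrightarrow> zmat_apply (shift_sum p) v i = v (i - int p) + v (i + int p)"
proof -
  assume p: "p > 0"
  have "zmat_apply (shift_sum p) v i = (\<Sum>j\<in>{i - int p..i + int p}. shift_sum p i j * v j)"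
    using zmat_apply_window[OF banded_shift_sum[OF p] order_refl] .
  also have "\<dots> = (\<Sum>j\<in>{i - int p, i + int p}. shift_sum p i j * v j)"
    by (rule sum.mono_neutral_right) (auto simp: shift_sum_entry[OF p])
  also have "\<dots> = v (i - int p) + v (i + int p)"
    using p by (simp add: shift_sum_entry[OF p])
  finally show ?thesis .
qed

section \<open>Transfer matrices of the eigenvalue equation\<close>

type_synonym cm2 = "complex \<times> complex \<times> complex \<times> complex"

fun cm2_mult :: "cm2 \<Rightarrow> cm2 \<Rightarrow> cm2" where
  "cm2_mult (a, b, c, d) (e, f, g, h) = (a*e + b*g, a*f + b*h, c*e + d*g, c*f + d*h)"

fun cm2_apply :: "cm2 \<Rightarrow> complex \<times> complex \<Rightarrow> complex \<times> complex" where
  "cm2_apply (a, b, c, d) (x, y) = (a*x + b*y, c*x + d*y)"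

fun cm2_trace :: "cm2 \<Rightarrow> complex" where
  "cm2_trace (a, b, c, d) = a + d"

fun cm2_det :: "cm2 \<Rightarrow> complex" where
  "cm2_det (a, b, c, d) = a*d - b*c"

fun cm2_scale :: "complex \<Rightarrow> cm2 \<Rightarrow> cm2" where
  "cm2_scale s (a, b, c, d) = (s*a, s*b, s*c, s*d)"

fun pair_scale :: "complex \<Rightarrow> complex \<times> complex \<Rightarrow> complex \<times> complex" where
  "pair_scale s (x, y) = (s*x, s*y)"

fun pm2_eval :: "pm2 \<Rightarrow> complex \<Rightarrow> cm2" where
  "pm2_eval (a, b, c, d) z = (poly a z, poly b z, poly c z, poly d z)"

lemma cm2_mult_assoc: "cm2_mult (cm2_mult X Y) Z = cm2_mult X (cm2_mult Y Z)"
  by (cases X, cases Y, cases Z) (simp add: algebra_simps)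

lemma cm2_apply_mult: "cm2_apply (cm2_mult X Y) v = cm2_apply X (cm2_apply Y v)"
  by (cases X, cases Y, cases v) (simp add: algebra_simps)

lemma cm2_apply_id: "cm2_apply (1, 0, 0, 1) v = v"
  by (cases v) simp

lemma cm2_apply_pair_scale: "cm2_apply X (pair_scale s v) = pair_scale s (cm2_apply X v)"
  by (cases X, cases v) (simp add: algebra_simps)

lemma pair_scale_pair_scale: "pair_scale s (pair_scale t v) = pair_scale (s * t) v"
  by (cases v) simp

lemma cm2_det_mult: "cm2_det (cm2_mult X Y) = cm2_det X * cm2_det Y"
  by (cases X, cases Y) (simp add: algebra_simps)

lemma cm2_mult_scale_left: "cm2_mult (cm2_scale s X) Y = cm2_scale s (cm2_mult X Y)"
  by (cases X, cases Y) (simp add: algebra_simps)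

lemma cm2_mult_scale_right: "cm2_mult X (cm2_scale s Y) = cm2_scale s (cm2_mult X Y)"
  by (cases X, cases Y) (simp add: algebra_simps)

lemma cm2_scale_scale: "cm2_scale s (cm2_scale t X) = cm2_scale (s * t) X"
  by (cases X) (simp add: algebra_simps)

lemma pm2_eval_mult: "pm2_eval (pm2_mult X Y) z = cm2_mult (pm2_eval X z) (pm2_eval Y z)"
  by (cases X, cases Y) (simp add: pm2_mult_def)

lemma cm2_eigenvector_exists:
  assumes "l * l - cm2_trace T * l + cm2_det T = 0"
  shows "\<exists>v. v \<noteq> (0, 0) \<and> cm2_apply T v = pair_scale l v"
proof -
  obtain a b c d where T: "T = (a, b, c, d)" by (cases T) auto
  have char: "l * l - (a + d) * l + (a*d - b*c) = 0" using assms T by simp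
  consider "b \<noteq> 0 \<or> a \<noteq> l" | "b = 0" "a = l" "c \<noteq> 0 \<or> d \<noteq> l" | "b = 0" "a = l" "c = 0" "d = l"
    by blast
  then show ?thesis
  proof cases
    case 1
    have "cm2_apply T (b, l - a) = pair_scale l (b, l - a)"
      unfolding T using char by (simp add: algebra_simps)
    with 1 show ?thesis by (intro exI[of _ "(b, l - a)"]) auto
  next
    case 2
    have "cm2_apply T (l - d, c) = pair_scale l (l - d, c)"
      unfolding T using 2 by (simp add: algebra_simps)
    with 2 show ?thesis by (intro exI[of _ "(l - d, c)"]) auto
  next
    case 3
    then have "cm2_apply T (1, 0) = pair_scale l (1, 0)" unfolding T by simp
    then show ?thesis by (intro exI[of _ "(1, 0)"]) auto
  qed
qed

lemma ex_add_inverse_eq: "\<exists>l::complex. l \<noteq> 0 \<and> l + inverse l = m"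
proof -
  define s where "s = csqrt (m * m - 4)"
  have s: "s * s = m * m - 4" unfolding s_def using power2_csqrt[of "m * m - 4"] by (simp add: power2_eq_square)
  define l where "l = (m + s) / 2"
  have "l * l - m * l + 1 = (s * s - (m * m - 4)) / 4" unfolding l_def by (simp add: field_simps)
  then have quad: "l * l - m * l + 1 = 0" using s by simp
  then have "l \<noteq> 0" by auto
  with quad show ?thesis by (intro exI[of _ l]) (simp add: field_simps)
qed

text \<open>For a solution of \<open>\<C> u = z u\<close> with \<open>w = \<M> u\<close> (so \<open>\<L> w = z u\<close>), the step matrix maps
  \<open>(u n, w n)\<close> to \<open>(u (n+1), w (n+1))\<close>; two consecutive steps starting at an even index
  give \<open>z\<^sup>-\<^sup>1 M\<^sub>n\<^sub>+\<^sub>1(z) M\<^sub>n(z)\<close>.\<close>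
definition step_matrix :: "(int \<Rightarrow> complex) \<Rightarrow> complex \<Rightarrow> int \<Rightarrow> cm2" where
  "step_matrix \<alpha> z n = (let r = inverse (rho (\<alpha> n)) in
     if even n then (- r * \<alpha> n, r / z, r * z, - r * cnj (\<alpha> n))
     else (- r * cnj (\<alpha> n), r, r, - r * \<alpha> n))"

fun step_prod :: "(int \<Rightarrow> complex) \<Rightarrow> complex \<Rightarrow> nat \<Rightarrow> cm2" where
  "step_prod \<alpha> z 0 = (1, 0, 0, 1)"
| "step_prod \<alpha> z (Suc k) = cm2_mult (step_matrix \<alpha> z (int k)) (step_prod \<alpha> z k)"

lemma step_matrix_two_steps:
  assumes "z \<noteq> 0" "even n"
  shows "cm2_mult (step_matrix \<alpha> z (n + 1)) (step_matrix \<alpha> z n) =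
         cm2_scale (inverse z) (cm2_mult (pm2_eval (transfer \<alpha> (n + 1)) z) (pm2_eval (transfer \<alpha> n) z))"
  using assms unfolding transfer_def step_matrix_def Let_def by (simp add: field_simps)

lemma step_prod_even:
  assumes "z \<noteq> 0"
  shows "step_prod \<alpha> z (2 * k) = cm2_scale (inverse z ^ k) (pm2_eval (transfer_prod \<alpha> (2 * k)) z)"
proof (induction k)
  case 0
  then show ?case by (simp add: pm2_id_def)
next
  case (Suc k)
  have e: "2 * Suc k = Suc (Suc (2 * k))" by simp
  let ?M1 = "pm2_eval (transfer \<alpha> (int (2 * k) + 1)) z"
  let ?M0 = "pm2_eval (transfer \<alpha> (int (2 * k))) z"
  let ?P = "pm2_eval (transfer_prod \<alpha> (2 * k)) z"
  have "step_prod \<alpha> z (2 * Suc k)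
      = cm2_mult (cm2_mult (step_matrix \<alpha> z (int (2 * k) + 1)) (step_matrix \<alpha> z (int (2 * k))))
          (step_prod \<alpha> z (2 * k))"
    unfolding e by (simp add: cm2_mult_assoc add.commute)
  also have "\<dots> = cm2_mult (cm2_scale (inverse z) (cm2_mult ?M1 ?M0)) (cm2_scale (inverse z ^ k) ?P)"
    using step_matrix_two_steps[OF assms] Suc by simp
  also have "\<dots> = cm2_scale (inverse z ^ Suc k) (cm2_mult ?M1 (cm2_mult ?M0 ?P))"
    by (simp only: cm2_mult_scale_left cm2_mult_scale_right cm2_scale_scale cm2_mult_assoc
        power_Suc mult.commute)
  also have "cm2_mult ?M1 (cm2_mult ?M0 ?P) = pm2_eval (transfer_prod \<alpha> (2 * Suc k)) z"
    unfolding e by (simp add: pm2_eval_mult add.commute)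
  finally show ?case .
qed

lemma trace_step_prod:
  assumes "z \<noteq> 0" "even p"
  shows "cm2_trace (step_prod \<alpha> z p) = discriminant \<alpha> p z"
proof -
  obtain k where k: "p = 2 * k" using assms(2) by auto
  obtain a b c d where abcd: "transfer_prod \<alpha> p = (a, b, c, d)" by (cases "transfer_prod \<alpha> p") auto
  have "z powi (- int (p div 2)) = inverse z ^ k" using k by (simp add: power_int_minus power_inverse)
  then show ?thesis
    using step_prod_even[OF assms(1), of \<alpha> k] unfolding k[symmetric] discriminant_def disc_poly_def abcd
    by (simp add: pm2_trace_def algebra_simps)
qed

lemma det_step_matrix:
  assumes "in_disk_seq \<alpha>" "z \<noteq> 0"
  shows "cm2_det (step_matrix \<alpha> z n) = -1"
proof -
  have sq: "rho (\<alpha> n) * rho (\<alpha> n) = 1 - \<alpha> n * cnj (\<alpha> n)" and nz: "rho (\<alpha> n) \<noteq> 0"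
    using assms rho_mult_self rho_nonzero unfolding in_disk_seq_def by auto
  have "cm2_det (step_matrix \<alpha> z n) = (\<alpha> n * cnj (\<alpha> n) - 1) / (rho (\<alpha> n) * rho (\<alpha> n))"
    unfolding step_matrix_def Let_def using assms(2) nz by (simp add: field_simps)
  also have "\<dots> = -1" using sq nz by (simp add: field_simps)
  finally show ?thesis .
qed

lemma det_step_prod: "in_disk_seq \<alpha> \<Longrightarrow> z \<noteq> 0 \<Longrightarrow> cm2_det (step_prod \<alpha> z k) = (-1) ^ k"
  by (induction k) (simp_all add: cm2_det_mult det_step_matrix)

definition step_solution :: "(int \<Rightarrow> complex) \<Rightarrow> complex \<Rightarrow> (int \<Rightarrow> complex) \<Rightarrow> (int \<Rightarrow> complex) \<Rightarrow> bool" where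
  "step_solution \<alpha> z u w \<longleftrightarrow> (\<forall>n. cm2_apply (step_matrix \<alpha> z n) (u n, w n) = (u (n + 1), w (n + 1)))"

lemma step_solutionD:
  assumes "step_solution \<alpha> z u w"
  shows "even n \<Longrightarrow> u (n + 1) = - inverse (rho (\<alpha> n)) * \<alpha> n * u n + inverse (rho (\<alpha> n)) / z * w n
               \<and> w (n + 1) = inverse (rho (\<alpha> n)) * z * u n - inverse (rho (\<alpha> n)) * cnj (\<alpha> n) * w n"
    and "odd n \<Longrightarrow> u (n + 1) = - inverse (rho (\<alpha> n)) * cnj (\<alpha> n) * u n + inverse (rho (\<alpha> n)) * w n
               \<and> w (n + 1) = inverse (rho (\<alpha> n)) * u n - inverse (rho (\<alpha> n)) * \<alpha> n * w n"
  using assms[unfolded step_solution_def, rule_format, of n] unfolding step_matrix_def Let_def by auto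

lemma step_solution_cmvM:
  assumes "in_disk_seq \<alpha>" "step_solution \<alpha> z u w"
  shows "zmat_apply (cmvM \<alpha>) u = w"
proof
  fix i
  have sq: "rho (\<alpha> n) * rho (\<alpha> n) = 1 - \<alpha> n * cnj (\<alpha> n)" and nz: "rho (\<alpha> n) \<noteq> 0" for n
    using assms rho_mult_self rho_nonzero unfolding in_disk_seq_def by auto
  show "zmat_apply (cmvM \<alpha>) u i = w i"
  proof (cases "(i - 1) mod 2 = 0")
    case True
    then have "odd i" by presburger
    then show ?thesis
      unfolding cmvM_def zmat_apply_theta_even[OF True]
      using step_solutionD(2)[OF assms(2) \<open>odd i\<close>] nz[of i] by (simp add: field_simps)
  next
    case False
    define a where "a = \<alpha> (i - 1)"
    define r where "r = rho a"
    have "odd (i - 1)" using False by presburger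
    then have ui: "u i = - inverse r * cnj a * u (i - 1) + inverse r * w (i - 1)"
      and wi: "w i = inverse r * u (i - 1) - inverse r * a * w (i - 1)"
      using step_solutionD(2)[OF assms(2), of "i - 1"] unfolding a_def r_def by simp_all
    have "zmat_apply (cmvM \<alpha>) u i = r * u (i - 1) - a * u i"
      unfolding cmvM_def zmat_apply_theta_odd[OF False] a_def r_def ..
    also have "\<dots> = inverse r * ((r * r + a * cnj a) * u (i - 1)) - inverse r * a * w (i - 1)"
      unfolding ui using nz[of "i - 1"] unfolding r_def a_def by (simp add: field_simps)
    also have "\<dots> = w i"
      unfolding wi using sq[of "i - 1"] unfolding r_def a_def by simp
    finally show ?thesis .
  qed
qed

lemma step_solution_cmvL:
  assumes "in_disk_seq \<alpha>" "z \<noteq> 0" "step_solution \<alpha> z u w"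
  shows "zmat_apply (cmvL \<alpha>) w = (\<lambda>i. z * u i)"
proof
  fix i
  have sq: "rho (\<alpha> n) * rho (\<alpha> n) = 1 - \<alpha> n * cnj (\<alpha> n)" and nz: "rho (\<alpha> n) \<noteq> 0" for n
    using assms rho_mult_self rho_nonzero unfolding in_disk_seq_def by auto
  show "zmat_apply (cmvL \<alpha>) w i = z * u i"
  proof (cases "(i - 0) mod 2 = 0")
    case True
    then have "even i" by presburger
    then show ?thesis
      unfolding cmvL_def zmat_apply_theta_even[OF True]
      using step_solutionD(1)[OF assms(3) \<open>even i\<close>] nz[of i] assms(2) by (simp add: field_simps)
  next
    case False
    define a where "a = \<alpha> (i - 1)"
    define r where "r = rho a"
    have "even (i - 1)" using False by presburger
    then have ui: "u i = - inverse r * a * u (i - 1) + inverse r / z * w (i - 1)"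
      and wi: "w i = inverse r * z * u (i - 1) - inverse r * cnj a * w (i - 1)"
      using step_solutionD(1)[OF assms(3), of "i - 1"] unfolding a_def r_def by simp_all
    have "zmat_apply (cmvL \<alpha>) w i = r * w (i - 1) - a * w i"
      unfolding cmvL_def zmat_apply_theta_odd[OF False] a_def r_def ..
    also have "\<dots> = inverse r * ((r * r + a * cnj a) * w (i - 1)) - inverse r * z * a * u (i - 1)"
      unfolding wi using nz[of "i - 1"] unfolding r_def a_def by (simp add: field_simps)
    also have "\<dots> = z * u i"
      unfolding ui using sq[of "i - 1"] assms(2) unfolding r_def a_def by (simp add: field_simps)
    finally show ?thesis .
  qed
qed

lemma step_solution_eigenvector:
  assumes "in_disk_seq \<alpha>" "z \<noteq> 0" "step_solution \<alpha> z u w"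
  shows "zmat_apply (cmv \<alpha>) u = (\<lambda>i. z * u i)"
  unfolding zmat_apply_cmv step_solution_cmvM[OF assms(1,3)] step_solution_cmvL[OF assms] ..

section \<open>Floquet solutions\<close>

definition floquet :: "nat \<Rightarrow> complex \<Rightarrow> (int \<Rightarrow> complex) \<Rightarrow> bool" where
  "floquet p l u \<longleftrightarrow> (\<forall>n. u n = l powi (n div int p) * u (n mod int p))"

lemma floquet_shift:
  assumes "floquet p l u" "p > 0" "l \<noteq> 0"
  shows "u (n + int p) = l * u n"
proof -
  have "(n + int p) div int p = n div int p + 1" "(n + int p) mod int p = n mod int p"
    using assms(2) by simp_all
  then have "u (n + int p) = l powi (n div int p + 1) * u (n mod int p)"
    using assms(1) unfolding floquet_def by metis
  also have "\<dots> = l * (l powi (n div int p) * u (n mod int p))"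
    using assms(3) by (simp add: power_int_add_1)
  also have "\<dots> = l * u n"
    using assms(1) unfolding floquet_def by metis
  finally show ?thesis .
qed

lemma zmat_apply_shift_sum_floquet:
  assumes "floquet p l u" "p > 0" "l \<noteq> 0"
  shows "zmat_apply (shift_sum p) u = (\<lambda>i. (l + inverse l) * u i)"
proof
  fix i
  have "u i = l * u (i - int p)" using floquet_shift[OF assms, of "i - int p"] by simp
  then show "zmat_apply (shift_sum p) u i = (l + inverse l) * u i"
    unfolding zmat_apply_shift_sum[OF assms(2)] floquet_shift[OF assms]
    using assms(3) by (simp add: field_simps)
qed

lemma periodic_seq_mod:
  assumes "periodic_seq \<alpha> p"
  shows "\<alpha> (n mod int p) = \<alpha> n"
proof -
  have per: "\<alpha> (m + int p) = \<alpha> m" for m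
    using assms unfolding periodic_seq_def by blast
  have "\<alpha> (m + int p * q) = \<alpha> m" for m q
  proof (induction q rule: int_induct[where k = 0])
    case (step1 q)
    have "\<alpha> (m + int p * (q + 1)) = \<alpha> ((m + int p * q) + int p)" by (simp add: algebra_simps)
    then show ?case using per step1 by simp
  next
    case (step2 q)
    have "\<alpha> (m + int p * q) = \<alpha> ((m + int p * (q - 1)) + int p)" by (simp add: algebra_simps)
    then show ?case using per step2 by simp
  qed simp
  from this[of "n mod int p" "n div int p"] show ?thesis by simp
qed

lemma step_matrix_mod:
  assumes "periodic_seq \<alpha> p" "even p"
  shows "step_matrix \<alpha> z (n mod int p) = step_matrix \<alpha> z n"
proof -
  have "2 dvd int p" using assms(2) by simp
  then have "even (n mod int p) \<longleftrightarrow> even n" by (simp add: dvd_mod_iff)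
  then show ?thesis unfolding step_matrix_def periodic_seq_mod[OF assms(1)] by simp
qed

definition floquet_pair ::
  "(int \<Rightarrow> complex) \<Rightarrow> nat \<Rightarrow> complex \<Rightarrow> complex \<Rightarrow> complex \<times> complex \<Rightarrow> int \<Rightarrow> complex \<times> complex" where
  "floquet_pair \<alpha> p z l v n =
     pair_scale (l powi (n div int p)) (cm2_apply (step_prod \<alpha> z (nat (n mod int p))) v)"

lemma floquet_pair_step:
  assumes per: "periodic_seq \<alpha> p" and ev: "even p" and p0: "p > 0" and l0: "l \<noteq> 0"
    and eig: "cm2_apply (step_prod \<alpha> z p) v = pair_scale l v"
  shows "cm2_apply (step_matrix \<alpha> z n) (floquet_pair \<alpha> p z l v n) = floquet_pair \<alpha> p z l v (n + 1)"
proof -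
  define q where "q = n div int p"
  define r where "r = nat (n mod int p)"
  have n: "n = int p * q + int r" and rp: "r < p"
    using p0 unfolding q_def r_def by (simp_all add: nat_less_iff)
  have step: "step_matrix \<alpha> z n = step_matrix \<alpha> z (int r)"
    using step_matrix_mod[OF per ev, of z n] p0 unfolding r_def by simp
  have here: "floquet_pair \<alpha> p z l v n = pair_scale (l powi q) (cm2_apply (step_prod \<alpha> z r) v)"
    unfolding floquet_pair_def q_def r_def ..
  show ?thesis
  proof (cases "Suc r < p")
    case True
    have e: "n + 1 = int (Suc r) + int p * q" unfolding n by simp
    have next_index: "(n + 1) div int p = q" "nat ((n + 1) mod int p) = Suc r"
      unfolding e using True by simp_all
    show ?thesis
      unfolding step floquet_pair_def next_index
      by (simp only: step_prod.simps cm2_apply_pair_scale cm2_apply_mult q_def r_def)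
  next
    case False
    then have r: "p = Suc r" using rp by simp
    then have "n + 1 = int p * (q + 1)" unfolding n by (simp add: algebra_simps)
    then have next_period: "(n + 1) div int p = q + 1" "(n + 1) mod int p = 0"
      using p0 by simp_all
    have "cm2_apply (step_matrix \<alpha> z n) (floquet_pair \<alpha> p z l v n)
        = pair_scale (l powi q) (cm2_apply (step_prod \<alpha> z p) v)"
      unfolding here step unfolding r
      by (simp only: step_prod.simps cm2_apply_pair_scale cm2_apply_mult)
    also have "\<dots> = pair_scale (l powi (q + 1)) v"
      unfolding eig pair_scale_pair_scale using l0 by (simp add: power_int_add)
    also have "\<dots> = floquet_pair \<alpha> p z l v (n + 1)"
      unfolding floquet_pair_def next_period by (simp add: cm2_apply_id)
    finally show ?thesis .
  qed
qed

lemma floquet_pair_fst_nonzero: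
  assumes "in_disk_seq \<alpha>" "even p" "p > 0" "z \<noteq> 0" "v \<noteq> (0, 0)"
  shows "\<exists>n. fst (floquet_pair \<alpha> p z l v n) \<noteq> 0"
proof (cases "fst v = 0")
  case False
  have "fst (floquet_pair \<alpha> p z l v 0) = fst v" unfolding floquet_pair_def by (cases v) simp
  with False show ?thesis by metis
next
  case True
  then obtain y where v: "v = (0, y)" and y: "y \<noteq> 0" using assms(5) by (cases v) auto
  have "1 div int p = 0" "1 mod int p = 1" using assms(2,3) by (auto simp: odd_pos)
  moreover have "rho (\<alpha> 0) \<noteq> 0" using assms(1) rho_nonzero unfolding in_disk_seq_def by auto
  ultimately have "fst (floquet_pair \<alpha> p z l v 1) \<noteq> 0"
    unfolding floquet_pair_def v using y assms(4) by (simp add: step_matrix_def Let_def)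
  then show ?thesis by metis
qed

lemma floquet_floquet_pair_fst:
  assumes "p > 0"
  shows "floquet p l (\<lambda>n. fst (floquet_pair \<alpha> p z l v n))"
proof -
  have fst_scale: "fst (pair_scale s w) = s * fst w" for s w by (cases w) simp
  show ?thesis
    unfolding floquet_def floquet_pair_def fst_scale using assms by simp
qed

lemma cmv_floquet_eigenvector:
  assumes disk: "in_disk_seq \<beta>" and per: "periodic_seq \<beta> p" and ev: "even p" and p0: "p > 0"
    and z0: "z \<noteq> 0" and l0: "l \<noteq> 0" and disc: "discriminant \<beta> p z = l + inverse l"
  obtains u where "zmat_apply (cmv \<beta>) u = (\<lambda>n. z * u n)" "\<exists>n. u n \<noteq> 0" "floquet p l u"
proof -
  have "l * l - cm2_trace (step_prod \<beta> z p) * l + cm2_det (step_prod \<beta> z p) = 0"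
    using trace_step_prod[OF z0 ev] det_step_prod[OF disk z0] ev disc l0 by (simp add: field_simps)
  then obtain v where v: "v \<noteq> (0, 0)" "cm2_apply (step_prod \<beta> z p) v = pair_scale l v"
    using cm2_eigenvector_exists by blast
  define u where "u n = fst (floquet_pair \<beta> p z l v n)" for n
  have "step_solution \<beta> z u (\<lambda>n. snd (floquet_pair \<beta> p z l v n))"
    unfolding step_solution_def u_def using floquet_pair_step[OF per ev p0 l0 v(2)] by simp
  then have "zmat_apply (cmv \<beta>) u = (\<lambda>n. z * u n)"
    by (rule step_solution_eigenvector[OF disk z0])
  moreover have "\<exists>n. u n \<noteq> 0"
    unfolding u_def by (rule floquet_pair_fst_nonzero[OF disk ev p0 z0 v(1)])
  moreover have "floquet p l u"
    unfolding u_def by (rule floquet_floquet_pair_fst[OF p0])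
  ultimately show ?thesis by (rule that)
qed

section \<open>A CMV matrix with \<open>\<Delta>(\<C>) = S\<^sup>p + S\<^sup>-\<^sup>p\<close> is periodic\<close>

lemma cmv_shift_sum_commute_entries:
  assumes "in_disk_seq \<alpha>" "p > 0" "disc_apply \<beta> p (cmv \<alpha>) = shift_sum p"
  shows "cmv \<alpha> i (j + int p) + cmv \<alpha> i (j - int p) = cmv \<alpha> (i - int p) j + cmv \<alpha> (i + int p) j"
proof -
  have shifted_unit: "zmat_apply (shift_sum p) (unit_seq j) = (\<lambda>k. unit_seq (j + int p) k + unit_seq (j - int p) k)"
    using zmat_apply_shift_sum[OF assms(2)] by (auto simp: unit_seq_def)
  have "cmv \<alpha> (i - int p) j + cmv \<alpha> (i + int p) j = zmat_apply (shift_sum p) (zmat_apply (cmv \<alpha>) (unit_seq j)) i"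
    unfolding zmat_apply_shift_sum[OF assms(2)] zmat_apply_unit_seq[OF banded_cmv] ..
  also have "\<dots> = zmat_apply (cmv \<alpha>) (zmat_apply (shift_sum p) (unit_seq j)) i"
    using disc_apply_commute_cmv[OF assms(1), of \<beta> p "unit_seq j"] assms(3) by simp
  also have "\<dots> = cmv \<alpha> i (j + int p) + cmv \<alpha> i (j - int p)"
    unfolding shifted_unit zmat_apply_add[OF banded_cmv] zmat_apply_unit_seq[OF banded_cmv] ..
  finally show ?thesis by simp
qed

text \<open>Since \<open>\<C>\<close> has bandwidth 2 and \<open>p \<ge> 2\<close>, one of the two terms on each side of
  \<open>cmv_shift_sum_commute_entries\<close> vanishes, depending on the position of \<open>(i, j)\<close>.\<close>
lemma cmv_shift_invariant:
  assumes "in_disk_seq \<alpha>" "even p" "p > 0" "disc_apply \<beta> p (cmv \<alpha>) = shift_sum p"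
  shows "cmv \<alpha> (i + int p) (j + int p) = cmv \<alpha> i j"
proof -
  let ?C = "cmv \<alpha>"
  have p2: "2 \<le> int p" using assms(2,3) by presburger
  have far: "?C a b = 0" if "2 < \<bar>a - b\<bar>" for a b
    using banded_cmv that unfolding banded_def by auto
  note commute = cmv_shift_sum_commute_entries[OF assms(1,3,4)]
  consider "2 < \<bar>i - j\<bar>" | "j - i \<ge> -1" | "j - i \<le> -2" by linarith
  then show ?thesis
  proof cases
    case 1
    then show ?thesis using far[of i j] far[of "i + int p" "j + int p"] by simp
  next
    case 2
    then have "?C i (j + int p + int p) = 0" "?C (i - int p) (j + int p) = 0"
      using p2 by (auto intro: far)
    then show ?thesis using commute[of i "j + int p"] by simp
  next
    case 3
    then have "?C (i + int p) (j - int p) = 0" "?C (i + int p + int p) j = 0"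
      using p2 by (auto intro: far)
    then show ?thesis using commute[of "i + int p" j] by simp
  qed
qed

lemma cmv_entries_below_diagonal:
  assumes "even n"
  shows "cmv \<alpha> n (n - 1) = cnj (\<alpha> n) * rho (\<alpha> (n - 1))"
    and "cmv \<alpha> (n + 1) (n - 1) = rho (\<alpha> n) * rho (\<alpha> (n - 1))"
    and "cmv \<alpha> (n + 1) n = - rho (\<alpha> n) * \<alpha> (n - 1)"
proof -
  have par: "(n - 0) mod 2 = 0" "(n + 1 - 0) mod 2 \<noteq> 0" "(n - 1) mod 2 \<noteq> 0" "(n + 1 - 1) mod 2 = 0"
    using assms by presburger+
  have entry: "cmv \<alpha> i j = zmat_apply (cmvL \<alpha>) (zmat_apply (cmvM \<alpha>) (unit_seq j)) i" for i j
    using zmat_apply_unit_seq[OF banded_cmv] zmat_apply_cmv by metis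
  note L = zmat_apply_theta_even[OF par(1)] zmat_apply_theta_odd[OF par(2)]
  note M = zmat_apply_theta_odd[OF par(3)] zmat_apply_theta_even[OF par(4)]
  show "cmv \<alpha> n (n - 1) = cnj (\<alpha> n) * rho (\<alpha> (n - 1))"
    "cmv \<alpha> (n + 1) (n - 1) = rho (\<alpha> n) * rho (\<alpha> (n - 1))"
    "cmv \<alpha> (n + 1) n = - rho (\<alpha> n) * \<alpha> (n - 1)"
    unfolding entry cmvL_def cmvM_def by (simp_all add: L M unit_seq_def)
qed

lemma rho_eq_of_real_norm: "cmod a < 1 \<Longrightarrow> rho a = complex_of_real (cmod (rho a))"
  unfolding rho_def by (simp add: abs_square_le_1)

lemma norm_rho_sq: "cmod a < 1 \<Longrightarrow> (cmod (rho a))\<^sup>2 = 1 - (cmod a)\<^sup>2"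
  unfolding rho_def by (simp add: abs_square_le_1)

lemma norm_rho_from_cmv_entries:
  assumes "in_disk_seq \<alpha>" "even n"
  shows "(cmod (rho (\<alpha> (n - 1))))\<^sup>2 = (cmod (cmv \<alpha> n (n - 1)))\<^sup>2 + (cmod (cmv \<alpha> (n + 1) (n - 1)))\<^sup>2"
    and "(cmod (rho (\<alpha> n)))\<^sup>2 = (cmod (cmv \<alpha> (n + 1) n))\<^sup>2 + (cmod (cmv \<alpha> (n + 1) (n - 1)))\<^sup>2"
proof -
  have d: "cmod (\<alpha> k) < 1" for k using assms(1) unfolding in_disk_seq_def by auto
  have "(cmod (cmv \<alpha> n (n - 1)))\<^sup>2 + (cmod (cmv \<alpha> (n + 1) (n - 1)))\<^sup>2
      = (cmod (rho (\<alpha> (n - 1))))\<^sup>2 * ((cmod (\<alpha> n))\<^sup>2 + (cmod (rho (\<alpha> n)))\<^sup>2)"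
    unfolding cmv_entries_below_diagonal[OF assms(2)] norm_mult complex_mod_cnj
    by (simp add: power_mult_distrib algebra_simps)
  then show "(cmod (rho (\<alpha> (n - 1))))\<^sup>2 = (cmod (cmv \<alpha> n (n - 1)))\<^sup>2 + (cmod (cmv \<alpha> (n + 1) (n - 1)))\<^sup>2"
    using norm_rho_sq[OF d, of n] by simp
  have "(cmod (cmv \<alpha> (n + 1) n))\<^sup>2 + (cmod (cmv \<alpha> (n + 1) (n - 1)))\<^sup>2
      = (cmod (rho (\<alpha> n)))\<^sup>2 * ((cmod (\<alpha> (n - 1)))\<^sup>2 + (cmod (rho (\<alpha> (n - 1))))\<^sup>2)"
    unfolding cmv_entries_below_diagonal[OF assms(2)] norm_mult norm_minus_cancel
    by (simp add: power_mult_distrib algebra_simps)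
  then show "(cmod (rho (\<alpha> n)))\<^sup>2 = (cmod (cmv \<alpha> (n + 1) n))\<^sup>2 + (cmod (cmv \<alpha> (n + 1) (n - 1)))\<^sup>2"
    using norm_rho_sq[OF d, of "n - 1"] by simp
qed

lemma rho_periodic_if_cmv_shift_invariant:
  assumes disk: "in_disk_seq \<alpha>" and "even p"
    and inv: "\<And>i j. cmv \<alpha> (i + int p) (j + int p) = cmv \<alpha> i j"
  shows "rho (\<alpha> (m + int p)) = rho (\<alpha> m)"
proof -
  let ?P = "int p"
  have d: "cmod (\<alpha> k) < 1" for k using disk unfolding in_disk_seq_def by auto
  have norm_per: "(cmod (rho (\<alpha> (n + ?P - 1))))\<^sup>2 = (cmod (rho (\<alpha> (n - 1))))\<^sup>2"
    "(cmod (rho (\<alpha> (n + ?P))))\<^sup>2 = (cmod (rho (\<alpha> n)))\<^sup>2" if "even n" for n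
  proof -
    have "even (n + ?P)" using that \<open>even p\<close> by simp
    moreover have "cmv \<alpha> (n + ?P) (n + ?P - 1) = cmv \<alpha> n (n - 1)"
      and "cmv \<alpha> (n + ?P + 1) (n + ?P - 1) = cmv \<alpha> (n + 1) (n - 1)"
      and "cmv \<alpha> (n + ?P + 1) (n + ?P) = cmv \<alpha> (n + 1) n"
      using inv[of n "n - 1"] inv[of "n + 1" "n - 1"] inv[of "n + 1" n] by (simp_all add: algebra_simps)
    ultimately show "(cmod (rho (\<alpha> (n + ?P - 1))))\<^sup>2 = (cmod (rho (\<alpha> (n - 1))))\<^sup>2"
      "(cmod (rho (\<alpha> (n + ?P))))\<^sup>2 = (cmod (rho (\<alpha> n)))\<^sup>2"
      using norm_rho_from_cmv_entries[OF disk that] norm_rho_from_cmv_entries[OF disk] by simp_all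
  qed
  have "(cmod (rho (\<alpha> (m + ?P))))\<^sup>2 = (cmod (rho (\<alpha> m)))\<^sup>2"
    using norm_per(2)[of m] norm_per(1)[of "m + 1"] by (cases "even m") (simp_all add: algebra_simps)
  then have "cmod (rho (\<alpha> (m + ?P))) = cmod (rho (\<alpha> m))"
    by (simp add: power2_eq_iff_nonneg)
  then show ?thesis by (metis rho_eq_of_real_norm[OF d])
qed

lemma periodic_if_cmv_shift_invariant:
  assumes disk: "in_disk_seq \<alpha>" and "even p"
    and inv: "\<And>i j. cmv \<alpha> (i + int p) (j + int p) = cmv \<alpha> i j"
  shows "periodic_seq \<alpha> p"
proof -
  let ?P = "int p"
  have nz: "rho (\<alpha> k) \<noteq> 0" for k using rho_nonzero disk unfolding in_disk_seq_def by auto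
  have ev_shift: "even (n + ?P)" if "even n" for n using that \<open>even p\<close> by simp
  have inv_left: "cmv \<alpha> (n + ?P) (n + ?P - 1) = cmv \<alpha> n (n - 1)"
    and inv_sub: "cmv \<alpha> (n + ?P + 1) (n + ?P) = cmv \<alpha> (n + 1) n" for n
    using inv[of n "n - 1"] inv[of "n + 1" n] by (simp_all add: algebra_simps)
  note rho_per = rho_periodic_if_cmv_shift_invariant[OF assms]
  show ?thesis unfolding periodic_seq_def
  proof
    fix m
    show "\<alpha> (m + ?P) = \<alpha> m"
    proof (cases "even m")
      case True
      have "cnj (\<alpha> (m + ?P)) * rho (\<alpha> (m - 1)) = cnj (\<alpha> (m + ?P)) * rho (\<alpha> (m + ?P - 1))"
        using rho_per[of "m - 1"] by (simp add: algebra_simps)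
      also have "\<dots> = cmv \<alpha> (m + ?P) (m + ?P - 1)"
        using cmv_entries_below_diagonal(1)[OF ev_shift[OF True]] by simp
      also have "\<dots> = cnj (\<alpha> m) * rho (\<alpha> (m - 1))"
        unfolding inv_left using cmv_entries_below_diagonal(1) True by simp
      finally show ?thesis using nz[of "m - 1"] by simp
    next
      case False
      define n where "n = m + 1"
      have n: "even n" using False unfolding n_def by simp
      have "- rho (\<alpha> n) * \<alpha> (n + ?P - 1) = - rho (\<alpha> (n + ?P)) * \<alpha> (n + ?P - 1)"
        using rho_per[of n] by simp
      also have "\<dots> = cmv \<alpha> (n + ?P + 1) (n + ?P)"
        using cmv_entries_below_diagonal(3)[OF ev_shift[OF n]] by simp
      also have "\<dots> = - rho (\<alpha> n) * \<alpha> (n - 1)"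
        unfolding inv_sub using cmv_entries_below_diagonal(3) n by simp
      finally have "\<alpha> (n + ?P - 1) = \<alpha> (n - 1)" using nz[of n] by simp
      then show ?thesis unfolding n_def by (simp add: algebra_simps)
    qed
  qed
qed

lemma discriminant_eq_if_disc_apply_eq_shift_sum:
  assumes disk: "in_disk_seq \<alpha>" and per: "periodic_seq \<alpha> p" and "even p" "p > 0"
    and H: "disc_apply \<beta> p (cmv \<alpha>) = shift_sum p" and z0: "z \<noteq> 0"
  shows "discriminant \<alpha> p z = discriminant \<beta> p z"
proof -
  obtain l where l0: "l \<noteq> 0" and l: "l + inverse l = discriminant \<alpha> p z"
    using ex_add_inverse_eq by blast
  obtain u where eig: "zmat_apply (cmv \<alpha>) u = (\<lambda>n. z * u n)" and "\<exists>n. u n \<noteq> 0" and fl: "floquet p l u"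
    using cmv_floquet_eigenvector[OF disk per \<open>even p\<close> \<open>p > 0\<close> z0 l0 l[symmetric]] .
  then obtain n where n: "u n \<noteq> 0" by blast
  have "discriminant \<beta> p z * u n = zmat_apply (disc_apply \<beta> p (cmv \<alpha>)) u n"
    using disc_apply_eigenvector[OF disk z0 eig] by simp
  also have "\<dots> = discriminant \<alpha> p z * u n"
    unfolding H zmat_apply_shift_sum_floquet[OF fl \<open>p > 0\<close> l0] l ..
  finally show ?thesis using n by simp
qed

section \<open>The discriminant of a periodic CMV matrix is \<open>S\<^sup>p + S\<^sup>-\<^sup>p\<close>\<close>

definition disc_level_poly :: "(int \<Rightarrow> complex) \<Rightarrow> nat \<Rightarrow> complex \<Rightarrow> complex poly" where
  "disc_level_poly \<beta> p m = disc_poly \<beta> p - Polynomial.smult m (monom 1 (p div 2))"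

context
  fixes \<beta> :: "int \<Rightarrow> complex" and p :: nat
  assumes disk: "in_disk_seq \<beta>" and ev: "even p" and p0: "p > 0"
begin

lemma half_period_bounds: "1 \<le> p div 2" "p div 2 < p"
  using ev p0 by presburger+

lemma coeff_disc_level_poly: "coeff (disc_level_poly \<beta> p m) p = rho_inv_prod \<beta> p"
  unfolding disc_level_poly_def using disc_poly_lead_and_const_coeff(1)[OF p0] half_period_bounds
  by (simp add: coeff_monom)

lemma degree_disc_level_poly: "degree (disc_level_poly \<beta> p m) = p"
proof (rule antisym)
  have "degree (Polynomial.smult m (monom (1::complex) (p div 2))) \<le> p"
    using half_period_bounds by (simp add: degree_monom_eq)
  then show "degree (disc_level_poly \<beta> p m) \<le> p"
    unfolding disc_level_poly_def using disc_poly_degree_le degree_diff_le by blast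
  show "p \<le> degree (disc_level_poly \<beta> p m)"
    using coeff_disc_level_poly rho_inv_prod_nonzero[OF disk] by (intro le_degree) simp
qed

lemma disc_level_poly_nonzero: "disc_level_poly \<beta> p m \<noteq> 0"
  using coeff_disc_level_poly rho_inv_prod_nonzero[OF disk] by (metis coeff_0)

lemma disc_level_poly_root_iff:
  "poly (disc_level_poly \<beta> p m) z = 0 \<longleftrightarrow> z \<noteq> 0 \<and> discriminant \<beta> p z = m"
proof -
  have "p div 2 \<noteq> 0" using half_period_bounds by simp
  then have "poly (disc_level_poly \<beta> p m) 0 = rho_inv_prod \<beta> p"
    unfolding disc_level_poly_def using disc_poly_lead_and_const_coeff(2)[OF p0]
    by (simp add: poly_monom)
  then have "poly (disc_level_poly \<beta> p m) 0 \<noteq> 0" using rho_inv_prod_nonzero[OF disk] by simp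
  moreover have "poly (disc_level_poly \<beta> p m) z = 0 \<longleftrightarrow> discriminant \<beta> p z = m" if "z \<noteq> 0"
    unfolding disc_level_poly_def discriminant_def using that
    by (auto simp: poly_monom power_int_minus field_simps)
  ultimately show ?thesis by blast
qed

lemma card_disc_level_poly_roots:
  assumes "rsquarefree (disc_level_poly \<beta> p m)"
  shows "card {z. poly (disc_level_poly \<beta> p m) z = 0} = p"
proof -
  let ?q = "disc_level_poly \<beta> p m"
  let ?R = "{z. poly ?q z = 0}"
  have "p = degree (Polynomial.smult (lead_coeff ?q) (\<Prod>z\<in>?R. [:- z, 1:]))"
    using degree_disc_level_poly complex_poly_decompose_rsquarefree[OF assms] by simp
  also have "\<dots> = (\<Sum>z\<in>?R. degree [:- z, 1:])"
    using disc_level_poly_nonzero by (simp add: degree_prod_sum_eq)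
  finally show ?thesis by simp
qed

text \<open>A double root \<open>x\<close> of \<open>T - m z\<^sup>h\<close> is a root of \<open>z T' - h T\<close> and determines \<open>m = T(x) / x\<^sup>h\<close>;
  the polynomial \<open>z T' - h T\<close> is nonzero at \<open>0\<close>.\<close>
lemma finite_not_rsquarefree_disc_level_poly: "finite {m. \<not> rsquarefree (disc_level_poly \<beta> p m)}"
proof -
  let ?T = "disc_poly \<beta> p"
  let ?h = "p div 2"
  define R where "R = [:0, 1:] * pderiv ?T - Polynomial.smult (of_nat ?h) ?T"
  have "poly R 0 = - of_nat ?h * rho_inv_prod \<beta> p"
    unfolding R_def using disc_poly_lead_and_const_coeff(2)[OF p0] by simp
  then have "R \<noteq> 0" using half_period_bounds rho_inv_prod_nonzero[OF disk] by force
  have "{m. \<not> rsquarefree (disc_level_poly \<beta> p m)} \<subseteq> (\<lambda>x. poly ?T x / x ^ ?h) ` {x. poly R x = 0}"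
  proof
    fix m assume "m \<in> {m. \<not> rsquarefree (disc_level_poly \<beta> p m)}"
    then obtain x where x: "poly (disc_level_poly \<beta> p m) x = 0" "poly (pderiv (disc_level_poly \<beta> p m)) x = 0"
      unfolding rsquarefree_roots by auto
    have "x \<noteq> 0" using x(1) disc_level_poly_root_iff by blast
    have val: "poly ?T x = m * x ^ ?h"
      using x(1) unfolding disc_level_poly_def by (simp add: poly_monom)
    have der: "poly (pderiv ?T) x = m * (of_nat ?h * x ^ (?h - 1))"
      using x(2) unfolding disc_level_poly_def by (simp add: pderiv_diff pderiv_smult pderiv_monom poly_monom)
    have "x * x ^ (?h - 1) = x ^ ?h" using half_period_bounds by (simp add: power_eq_if)
    then have "poly R x = 0" unfolding R_def using val der by (simp add: algebra_simps)
    moreover have "m = poly ?T x / x ^ ?h" using val \<open>x \<noteq> 0\<close> by simp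
    ultimately show "m \<in> (\<lambda>x. poly ?T x / x ^ ?h) ` {x. poly R x = 0}" by blast
  qed
  moreover have "finite ((\<lambda>x. poly ?T x / x ^ ?h) ` {x. poly R x = 0})"
    using poly_roots_finite[OF \<open>R \<noteq> 0\<close>] by simp
  ultimately show ?thesis by (rule finite_subset)
qed

end

lemma infinite_inverse_sum_avoiding:
  assumes "finite (B :: complex set)"
  shows "infinite {l. l \<noteq> 0 \<and> l + inverse l \<notin> B}"
proof -
  define E where "E = {0} \<union> (\<Union>m\<in>B. {l. poly [:1, - m, 1:] l = 0})"
  have "finite E"
    unfolding E_def using assms by (intro finite_UnI finite_UN_I poly_roots_finite) auto
  then have "infinite (UNIV - E)"
    by (rule Diff_infinite_finite) (rule infinite_UNIV_char_0)
  moreover have "UNIV - E \<subseteq> {l. l \<noteq> 0 \<and> l + inverse l \<notin> B}"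
  proof
    fix l assume l: "l \<in> UNIV - E"
    then have "l \<noteq> 0" unfolding E_def by blast
    moreover have "l + inverse l \<notin> B"
    proof
      assume "l + inverse l \<in> B"
      moreover have "poly [:1, - (l + inverse l), 1:] l = 0"
        using \<open>l \<noteq> 0\<close> by (simp add: field_simps)
      ultimately have "l \<in> E" unfolding E_def by blast
      with l show False by blast
    qed
    ultimately show "l \<in> {l. l \<noteq> 0 \<and> l + inverse l \<notin> B}" by blast
  qed
  ultimately show ?thesis by (rule infinite_super[rotated])
qed

lemma eigenvectors_linear_independent:
  fixes u :: "nat \<Rightarrow> int \<Rightarrow> complex" and z c :: "nat \<Rightarrow> complex"
  assumes A: "banded r A"
    and "\<And>k. k < m \<Longrightarrow> zmat_apply A (u k) = (\<lambda>n. z k * u k n)"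
    and "\<And>k. k < m \<Longrightarrow> \<exists>n. u k n \<noteq> 0"
    and "inj_on z {..<m}"
    and "\<And>n. (\<Sum>k<m. c k * u k n) = 0"
  shows "\<forall>k<m. c k = 0"
  using assms(2-)
proof (induction m arbitrary: c)
  case (Suc m)
  have applied: "zmat_apply A (\<lambda>n. \<Sum>k<Suc m. c k * u k n) i = (\<Sum>k<Suc m. c k * z k * u k i)" for i
  proof -
    have "zmat_apply A (\<lambda>n. \<Sum>k<Suc m. c k * u k n) i = (\<Sum>k<Suc m. zmat_apply A (\<lambda>n. c k * u k n) i)"
      by (rule zmat_apply_sum[OF A]) simp
    also have "\<dots> = (\<Sum>k<Suc m. c k * z k * u k i)"
      by (intro sum.cong refl) (simp add: zmat_apply_scale[OF A] Suc.prems(1) mult.assoc)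
    finally show ?thesis .
  qed
  have "(\<lambda>n. \<Sum>k<Suc m. c k * u k n) = (\<lambda>n. 0)" using Suc.prems(4) by simp
  then have weighted: "(\<Sum>k<Suc m. c k * z k * u k i) = 0" for i
    using applied[of i] by (simp add: zmat_apply_def)
  have reduced: "(\<Sum>k<m. (c k * (z k - z m)) * u k n) = 0" for n
  proof -
    have "(\<Sum>k<m. (c k * (z k - z m)) * u k n)
        = (\<Sum>k<Suc m. c k * z k * u k n) - z m * (\<Sum>k<Suc m. c k * u k n)"
      by (simp add: sum_distrib_left algebra_simps sum_subtractf)
    with weighted[of n] Suc.prems(4)[of n] show ?thesis by simp
  qed
  have inj: "inj_on z {..<m}" using Suc.prems(3) by (rule inj_on_subset) auto
  have "\<forall>k<m. c k * (z k - z m) = 0"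
    by (rule Suc.IH[OF _ _ inj reduced]) (use Suc.prems in auto)
  moreover have "z k \<noteq> z m" if "k < m" for k
    using Suc.prems(3) that by (auto dest: inj_onD)
  ultimately have cm: "\<forall>k<m. c k = 0" by auto
  obtain n where "u m n \<noteq> 0" using Suc.prems(2) by blast
  moreover have "c m * u m n = 0" using Suc.prems(4)[of n] cm by simp
  ultimately show ?case using cm less_Suc_eq by auto
qed simp

lemma floquet_eigenvectors_independent_on_period:
  fixes u :: "nat \<Rightarrow> int \<Rightarrow> complex" and z c :: "nat \<Rightarrow> complex"
  assumes "banded r A" "p > 0"
    and "\<And>k. k < m \<Longrightarrow> zmat_apply A (u k) = (\<lambda>n. z k * u k n)"
    and "\<And>k. k < m \<Longrightarrow> \<exists>n. u k n \<noteq> 0"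
    and "inj_on z {..<m}"
    and fl: "\<And>k. k < m \<Longrightarrow> floquet p l (u k)"
    and period: "\<And>s. s < p \<Longrightarrow> (\<Sum>k<m. c k * u k (int s)) = 0"
  shows "\<forall>k<m. c k = 0"
proof (rule eigenvectors_linear_independent[OF assms(1,3,4,5)])
  fix n
  have "u k n = l powi (n div int p) * u k (n mod int p)" if "k < m" for k
    using fl[OF that] unfolding floquet_def by blast
  then have "(\<Sum>k<m. c k * u k n) = l powi (n div int p) * (\<Sum>k<m. c k * u k (n mod int p))"
    unfolding sum_distrib_left by (intro sum.cong) (simp_all add: algebra_simps)
  also have "(\<Sum>k<m. c k * u k (n mod int p)) = 0"
    using period[of "nat (n mod int p)"] \<open>p > 0\<close> by (simp add: nat_less_iff)
  finally show "(\<Sum>k<m. c k * u k n) = 0" by simp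
qed

lemma trivial_kernel_if_rows_independent:
  fixes U :: "nat \<Rightarrow> nat \<Rightarrow> complex"
  assumes indep: "\<And>c. (\<And>s. s < p \<Longrightarrow> (\<Sum>k<p. c k * U k s) = 0) \<Longrightarrow> \<forall>k<p. c k = 0"
    and kernel: "\<And>k. k < p \<Longrightarrow> (\<Sum>s<p. U k s * b s) = 0"
  shows "\<forall>s<p. b s = 0"
proof -
  define M where "M = mat p p (\<lambda>(k, s). U k s)"
  have M: "M \<in> carrier_mat p p" unfolding M_def by simp
  have "det (transpose_mat M) \<noteq> 0"
  proof
    assume "det (transpose_mat M) = 0"
    then obtain v where v: "v \<in> carrier_vec p" "v \<noteq> 0\<^sub>v p" "transpose_mat M *\<^sub>v v = 0\<^sub>v p"
      using det_0_iff_vec_prod_zero[of "transpose_mat M" p] M by auto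
    have "(\<Sum>k<p. v $ k * U k s) = 0" if "s < p" for s
    proof -
      have "(transpose_mat M *\<^sub>v v) $ s = (\<Sum>k<p. v $ k * U k s)"
        using that v(1) M unfolding M_def by (simp add: scalar_prod_def lessThan_atLeast0 mult.commute)
      then show ?thesis using v(3) that by simp
    qed
    then have "\<forall>k<p. v $ k = 0" by (rule indep)
    then have "v = 0\<^sub>v p" using v(1) by (intro eq_vecI) auto
    with v(2) show False by simp
  qed
  then have "det M \<noteq> 0" using det_transpose[OF M] by simp
  have "M *\<^sub>v vec p b = 0\<^sub>v p"
  proof (intro eq_vecI)
    fix k assume "k < dim_vec (0\<^sub>v p)"
    then have k: "k < p" by simp
    have "(M *\<^sub>v vec p b) $ k = (\<Sum>s<p. U k s * b s)"
      using k unfolding M_def by (simp add: scalar_prod_def lessThan_atLeast0)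
    then show "(M *\<^sub>v vec p b) $ k = 0\<^sub>v p $ k" using kernel[OF k] k by simp
  qed (use M in simp)
  then have "vec p b = 0\<^sub>v p"
    using det_0_iff_vec_prod_zero[OF M] \<open>det M \<noteq> 0\<close> by (metis vec_carrier)
  then show ?thesis by (metis index_vec index_zero_vec(1))
qed

text \<open>A row annihilating \<open>p\<close> independent Floquet sequences with multiplier \<open>l\<close> annihilates every
  sequence with that multiplier, in particular the one supported on a residue class mod \<open>p\<close>.\<close>
lemma floquet_residue_sums_eq_0:
  fixes u :: "nat \<Rightarrow> int \<Rightarrow> complex"
  assumes "p > 0" "finite W"
    and fl: "\<And>k. k < p \<Longrightarrow> floquet p l (u k)"
    and indep: "\<And>c. (\<And>s. s < p \<Longrightarrow> (\<Sum>k<p. c k * u k (int s)) = 0) \<Longrightarrow> \<forall>k<p. c k = 0"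
    and orth: "\<And>k. k < p \<Longrightarrow> (\<Sum>j\<in>W. r j * u k j) = 0"
    and "s < p"
  shows "(\<Sum>j | j \<in> W \<and> nat (j mod int p) = s. r j * l powi (j div int p)) = 0"
proof -
  define b where "b s' = (\<Sum>j | j \<in> W \<and> nat (j mod int p) = s'. r j * l powi (j div int p))" for s'
  have kernel: "(\<Sum>s'<p. u k (int s') * b s') = 0" if "k < p" for k
  proof -
    have "(\<Sum>s'<p. u k (int s') * b s') = (\<Sum>s'<p. \<Sum>j | j \<in> W \<and> nat (j mod int p) = s'. r j * u k j)"
      unfolding b_def sum_distrib_left
    proof (intro sum.cong refl)
      fix s' j assume "j \<in> {j. j \<in> W \<and> nat (j mod int p) = s'}"
      then have "j mod int p = int s'" using \<open>p > 0\<close> by auto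
      moreover have "u k j = l powi (j div int p) * u k (j mod int p)"
        using fl[OF that] unfolding floquet_def by blast
      ultimately show "u k (int s') * (r j * l powi (j div int p)) = r j * u k j"
        by (simp add: ac_simps)
    qed
    also have "\<dots> = (\<Sum>j\<in>W. r j * u k j)"
      by (rule sum.group) (use assms(1,2) in \<open>auto simp: nat_less_iff\<close>)
    finally show ?thesis using orth[OF that] by simp
  qed
  from indep kernel have "\<forall>s'<p. b s' = 0"
    by (rule trivial_kernel_if_rows_independent[where U = "\<lambda>k s'. u k (int s')"])
  then show ?thesis using \<open>s < p\<close> unfolding b_def by simp
qed

lemma laurent_sum_coeffs_eq_0:
  fixes K :: "int set" and f :: "int \<Rightarrow> complex" and e :: "int \<Rightarrow> int"
  assumes fin: "finite K" and inj: "inj_on e K" and inf: "infinite G"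
    and G: "\<And>l. l \<in> G \<Longrightarrow> l \<noteq> 0 \<and> (\<Sum>j\<in>K. f j * l powi (e j)) = 0"
  shows "\<forall>j\<in>K. f j = 0"
proof -
  define N where "N = (\<Sum>j\<in>K. \<bar>e j\<bar>)"
  have eN: "0 \<le> e j + N" if "j \<in> K" for j
    using member_le_sum[OF that _ fin, of "\<lambda>j. \<bar>e j\<bar>"] unfolding N_def by simp
  define Q where "Q = (\<Sum>j\<in>K. monom (f j) (nat (e j + N)))"
  have "G \<subseteq> {x. poly Q x = 0}"
  proof
    fix l assume l: "l \<in> G"
    then have "l \<noteq> 0" using G by blast
    have "poly Q l = (\<Sum>j\<in>K. f j * l ^ nat (e j + N))" unfolding Q_def by (simp add: poly_sum poly_monom)
    also have "\<dots> = (\<Sum>j\<in>K. f j * l powi (e j)) * l powi N"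
      unfolding sum_distrib_right
    proof (intro sum.cong refl)
      fix j assume "j \<in> K"
      then have "l ^ nat (e j + N) = l powi (e j + N)" using eN by (simp add: power_int_def)
      also have "\<dots> = l powi (e j) * l powi N" using \<open>l \<noteq> 0\<close> by (simp add: power_int_add)
      finally show "f j * l ^ nat (e j + N) = f j * l powi (e j) * l powi N" by simp
    qed
    also have "\<dots> = 0" using G[OF l] by simp
    finally show "l \<in> {x. poly Q x = 0}" by simp
  qed
  then have "Q = 0" using inf poly_roots_finite finite_subset by blast
  show ?thesis
  proof
    fix j0 assume j0: "j0 \<in> K"
    have "coeff Q (nat (e j0 + N)) = (\<Sum>j\<in>K. if nat (e j + N) = nat (e j0 + N) then f j else 0)"
      unfolding Q_def by (simp add: coeff_sum coeff_monom)
    also have "\<dots> = f j0"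
    proof -
      have "nat (e j + N) = nat (e j0 + N) \<longleftrightarrow> j = j0" if "j \<in> K" for j
        using inj_onD[OF inj _ that j0] eN[OF that] eN[OF j0] by auto
      then show ?thesis using fin j0 by (simp add: sum.delta cong: sum.cong)
    qed
    finally show "f j0 = 0" using \<open>Q = 0\<close> by simp
  qed
qed

lemma periodic_cmv_floquet_eigenbasis:
  assumes disk: "in_disk_seq \<beta>" and per: "periodic_seq \<beta> p" and ev: "even p" and p0: "p > 0"
    and l0: "l \<noteq> 0" and sqfree: "rsquarefree (disc_level_poly \<beta> p (l + inverse l))"
  obtains z :: "nat \<Rightarrow> complex" and u :: "nat \<Rightarrow> int \<Rightarrow> complex"
  where "inj_on z {..<p}"
    and "\<And>k. k < p \<Longrightarrow> z k \<noteq> 0 \<and> discriminant \<beta> p (z k) = l + inverse l"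
    and "\<And>k. k < p \<Longrightarrow> zmat_apply (cmv \<beta>) (u k) = (\<lambda>n. z k * u k n)"
    and "\<And>k. k < p \<Longrightarrow> \<exists>n. u k n \<noteq> 0"
    and "\<And>k. k < p \<Longrightarrow> floquet p l (u k)"
proof -
  obtain zs where zs: "distinct zs" "set zs = {z. poly (disc_level_poly \<beta> p (l + inverse l)) z = 0}"
    using finite_distinct_list[OF poly_roots_finite[OF disc_level_poly_nonzero[OF disk ev p0]]] by blast
  have len: "length zs = p"
    using distinct_card[OF zs(1)] card_disc_level_poly_roots[OF disk ev p0 sqfree] zs(2) by simp
  have root: "zs ! k \<noteq> 0 \<and> discriminant \<beta> p (zs ! k) = l + inverse l" if "k < p" for k
    using nth_mem[of k zs] that len zs(2) disc_level_poly_root_iff[OF disk ev p0] by auto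
  have "\<forall>k\<in>{..<p}. \<exists>v. zmat_apply (cmv \<beta>) v = (\<lambda>n. zs ! k * v n) \<and> (\<exists>n. v n \<noteq> 0) \<and> floquet p l v"
  proof
    fix k assume "k \<in> {..<p}"
    then have "zs ! k \<noteq> 0" "discriminant \<beta> p (zs ! k) = l + inverse l" using root by auto
    from cmv_floquet_eigenvector[OF disk per ev p0 this(1) l0 this(2)]
    show "\<exists>v. zmat_apply (cmv \<beta>) v = (\<lambda>n. zs ! k * v n) \<and> (\<exists>n. v n \<noteq> 0) \<and> floquet p l v"
      by blast
  qed
  then obtain u where u: "\<forall>k\<in>{..<p}.
      zmat_apply (cmv \<beta>) (u k) = (\<lambda>n. zs ! k * u k n) \<and> (\<exists>n. u k n \<noteq> 0) \<and> floquet p l (u k)"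
    by (rule bchoice[elim_format]) blast
  have "inj_on (\<lambda>k. zs ! k) {..<p}" using zs(1) len by (simp add: inj_on_nth)
  with root u show ?thesis by (intro that) auto
qed

lemma periodic_disc_apply_residue_row_sums:
  assumes disk: "in_disk_seq \<beta>" and per: "periodic_seq \<beta> p" and ev: "even p" and p0: "p > 0"
    and l0: "l \<noteq> 0" and sqfree: "rsquarefree (disc_level_poly \<beta> p (l + inverse l))" and "s < p"
  shows "(\<Sum>j | j \<in> {i - 2 * int p..i + 2 * int p} \<and> nat (j mod int p) = s.
            (disc_apply \<beta> p (cmv \<beta>) i j - shift_sum p i j) * l powi (j div int p)) = 0"
proof -
  obtain z u where inj: "inj_on z {..<p}"
    and root: "\<And>k. k < p \<Longrightarrow> z k \<noteq> 0 \<and> discriminant \<beta> p (z k) = l + inverse l"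
    and eig: "\<And>k. k < p \<Longrightarrow> zmat_apply (cmv \<beta>) (u k) = (\<lambda>n. z k * u k n)"
    and nz: "\<And>k. k < p \<Longrightarrow> \<exists>n. u k n \<noteq> 0" and fl: "\<And>k. k < p \<Longrightarrow> floquet p l (u k)"
    using periodic_cmv_floquet_eigenbasis[OF disk per ev p0 l0 sqfree] by blast
  let ?D = "\<lambda>i j. disc_apply \<beta> p (cmv \<beta>) i j - shift_sum p i j"
  have shift_band: "banded (2 * int p) (shift_sum p)"
    by (rule banded_mono[OF banded_shift_sum[OF p0]]) simp
  have "banded (2 * int p) ?D"
    using banded_disc_apply shift_band unfolding banded_def by simp
  have orth: "(\<Sum>j\<in>{i - 2 * int p..i + 2 * int p}. ?D i j * u k j) = 0" if "k < p" for k
  proof -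
    have "zmat_apply ?D (u k) i
        = zmat_apply (disc_apply \<beta> p (cmv \<beta>)) (u k) i - zmat_apply (shift_sum p) (u k) i"
      by (rule zmat_apply_diff[OF banded_disc_apply shift_band])
    also have "\<dots> = 0"
      using disc_apply_eigenvector[OF disk _ eig[OF that]] zmat_apply_shift_sum_floquet[OF fl[OF that] p0 l0]
        root[OF that] by simp
    finally show ?thesis using zmat_apply_window[OF \<open>banded (2 * int p) ?D\<close> order_refl] by simp
  qed
  show ?thesis
    using floquet_eigenvectors_independent_on_period[OF banded_cmv p0 eig nz inj fl]
    by (intro floquet_residue_sums_eq_0[OF p0 _ fl _ orth \<open>s < p\<close>]) auto
qed

lemma disc_apply_periodic_cmv:
  assumes disk: "in_disk_seq \<beta>" and per: "periodic_seq \<beta> p" and ev: "even p" and p0: "p > 0"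
  shows "disc_apply \<beta> p (cmv \<beta>) = shift_sum p"
proof (intro ext)
  fix i j
  let ?D = "\<lambda>i j. disc_apply \<beta> p (cmv \<beta>) i j - shift_sum p i j"
  let ?W = "{i - 2 * int p..i + 2 * int p}"
  define K where "K = {j' \<in> ?W. nat (j' mod int p) = nat (j mod int p)}"
  define G where "G = {l. l \<noteq> 0 \<and> l + inverse l \<notin> {m. \<not> rsquarefree (disc_level_poly \<beta> p m)}}"
  have "infinite G"
    unfolding G_def by (rule infinite_inverse_sum_avoiding[OF finite_not_rsquarefree_disc_level_poly[OF disk ev p0]])
  have inj: "inj_on (\<lambda>j. j div int p) K"
  proof (rule inj_onI)
    fix a b assume "a \<in> K" "b \<in> K" and "a div int p = b div int p"
    moreover have "a mod int p = b mod int p"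
      using \<open>a \<in> K\<close> \<open>b \<in> K\<close> p0 unfolding K_def by (simp add: nat_eq_iff2)
    ultimately show "a = b" by (metis div_mult_mod_eq)
  qed
  have "\<forall>j'\<in>K. ?D i j' = 0"
  proof (rule laurent_sum_coeffs_eq_0[OF _ inj \<open>infinite G\<close>])
    show "finite K" unfolding K_def by (rule finite_subset[of _ ?W]) auto
    fix l assume "l \<in> G"
    then show "l \<noteq> 0 \<and> (\<Sum>j'\<in>K. ?D i j' * l powi (j' div int p)) = 0"
      unfolding G_def K_def
      using periodic_disc_apply_residue_row_sums[OF disk per ev p0, of l "nat (j mod int p)" i] p0
      by (simp add: nat_less_iff)
  qed
  moreover have "?D i j = 0" if "j \<notin> ?W"
    using banded_disc_apply[of p \<beta> \<beta>] banded_mono[OF banded_shift_sum[OF p0], of "2 * int p"] that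
    unfolding banded_def by auto
  ultimately show "disc_apply \<beta> p (cmv \<beta>) i j = shift_sum p i j"
    unfolding K_def by (cases "j \<in> ?W") auto
qed

lemma disc_poly_eq_if_discriminant_eq:
  assumes "\<And>z. z \<noteq> 0 \<Longrightarrow> discriminant \<alpha> p z = discriminant \<beta> p z"
  shows "disc_poly \<alpha> p = disc_poly \<beta> p"
proof -
  let ?d = "disc_poly \<alpha> p - disc_poly \<beta> p"
  have "UNIV - {0} \<subseteq> {z. poly ?d z = 0}"
    using assms by (auto simp: discriminant_def)
  moreover have "infinite (UNIV - {0 :: complex})"
    by (rule Diff_infinite_finite) (simp_all add: infinite_UNIV_char_0)
  ultimately have "infinite {z. poly ?d z = 0}" by (rule infinite_super)
  then have "?d = 0" using poly_roots_finite by blast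
  then show ?thesis by simp
qed

theorem theorem4p1:
  fixes p :: nat and \<alpha>0 \<alpha> :: "int \<Rightarrow> complex"
  assumes "even p" and "p > 0"
    and "in_disk_seq \<alpha>0" and "periodic_seq \<alpha>0 p"
    and "in_disk_seq \<alpha>"
  shows "disc_apply \<alpha>0 p (cmv \<alpha>) =
           (\<lambda>i j. zmat_zpow shiftR (int p) i j + zmat_zpow shiftR (- int p) i j)
         \<longleftrightarrow> cmv \<alpha> \<in> iso_torus \<alpha>0 p"
  unfolding shift_sum_def[symmetric]
proof
  assume H: "disc_apply \<alpha>0 p (cmv \<alpha>) = shift_sum p"
  then have per: "periodic_seq \<alpha> p"
    using periodic_if_cmv_shift_invariant[OF assms(5,1)] cmv_shift_invariant[OF assms(5,1,2)] by blast
  then show "cmv \<alpha> \<in> iso_torus \<alpha>0 p"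
    using discriminant_eq_if_disc_apply_eq_shift_sum[OF assms(5) per assms(1,2) H] assms(5)
    unfolding iso_torus_def by blast
next
  assume "cmv \<alpha> \<in> iso_torus \<alpha>0 p"
  then obtain \<beta> where \<beta>: "cmv \<alpha> = cmv \<beta>" "in_disk_seq \<beta>" "periodic_seq \<beta> p"
    and disc: "\<And>z. z \<noteq> 0 \<Longrightarrow> discriminant \<beta> p z = discriminant \<alpha>0 p z"
    unfolding iso_torus_def by blast
  have "disc_apply \<alpha>0 p (cmv \<alpha>) = disc_apply \<beta> p (cmv \<beta>)"
    using disc_poly_eq_if_discriminant_eq[OF disc] unfolding disc_apply_def \<beta>(1) by simp
  also have "\<dots> = shift_sum p"
    by (rule disc_apply_periodic_cmv[OF \<beta>(2,3) assms(1,2)])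
  finally show "disc_apply \<alpha>0 p (cmv \<alpha>) = shift_sum p" .
qed

end
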